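(* Let $(A,[\cdot,\cdot],\circ)$ be a Malcev-Poisson algebra and let $\Delta,\delta:A\to A\otimes A$ be linear maps whose duals $\Delta^*,\delta^*$ define a Malcev-Poisson algebra structure on $A^*$ (product $\xi\circ_{A^*}\eta=\Delta^*(\xi\otimes\eta)$, bracket $[\xi,\eta]^*=\delta^*(\xi\otimes\eta)$). Then the following are equivalent: (1) $(A,[\cdot,\cdot],\circ,\Delta,\delta)$ is a Malcev-Poisson bialgebra; (2) $(A,A^*,\mathrm{ad}_A^*,-L^*,\mathrm{ad}_{A^*}^*,-\mathcal{L}_{A^*}^* )$ is a matched pair of Malcev-Poisson algebras; (3) $(A\oplus A^*,A,A^* )$ is a standard Manin triple of Malcev-Poisson algebras with respect to $\omega_d(x+\xi,y+\eta)=\langle x,\eta\rangle+\langle\xi,y\rangle$.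
   Context: All spaces finite-dimensional over an algebraically closed field of characteristic $0$. Malcev algebra: antisymmetric bracket with $J(x,y,[x,z])=[J(x,y,z),x]$, $J(x,y,z)=[[x,y],z]+[[z,x],y]+[[y,z],x]$. Malcev-Poisson algebra: Malcev bracket plus commutative associative product $\circ$ with $[x,y\circ z]=[x,y]\circ z+y\circ[x,z]$. Representations: Malcev, $\varrho([[x,y],z])=\varrho(z)\varrho(y)\varrho(x)-\varrho(y)\varrho(x)\varrho(z)+\varrho(x)\varrho([y,z])+\varrho([x,z])\varrho(y)$; associative, $\mu(x\circ y)=\mu(x)\mu(y)$; Malcev-Poisson, a pair $(\varrho,\mu)$ of these with $\varrho(x\circ y)=\mu(y)\varrho(x)+\mu(x)\varrho(y)$, $\mu([x,y])=\varrho(x)\mu(y)-\mu(y)\varrho(x)$. Notation: $\mathrm{ad}(x)y=[x,y]$, $L(x)y=x\circ y$; for $\theta:A\to\mathrm{End}(V)$, $\langle\theta^*(x)\xi,v\rangle=-\langle\xi,\theta(x)v\rangle$; $\mathrm{ad}_A^*,L^*$ are duals of $\mathrm{ad},L$; $\mathrm{ad}_{A^*}^*,\mathcal{L}_{A^*}^*:A^*\to\mathrm{End}(A)$ are given by $\langle\mathrm{ad}_{A^*}^*(\xi)x,\eta\rangle=-\langle x,[\xi,\eta]^*\rangle$, $\langle\mathcal{L}_{A^*}^*(\xi)x,\eta\rangle=-\langle x,\xi\circ_{A^*}\eta\rangle$. $\tau(x\otimes y)=y\otimes x$, $\sigma(x\otimes y\otimes z\otimes t)=y\otimes z\otimes t\otimes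 x$. Malcev-Poisson bialgebra $(A,[\cdot,\cdot],\circ,\Delta,\delta)$: (a) $(A,[\cdot,\cdot],\circ)$ Malcev-Poisson algebra; (b) $(A,\Delta,\delta)$ Malcev-Poisson coalgebra, i.e. $\tau\Delta=\Delta$, $(\mathrm{id}\otimes\Delta)\Delta=(\Delta\otimes\mathrm{id})\Delta$, $\tau\delta=-\delta$, $(\mathrm{id}\otimes\tau\otimes\mathrm{id})(\delta\otimes\delta)\delta=(\mathrm{id}+\sigma+\sigma^2+\sigma^3)(\delta\otimes\mathrm{id}\otimes\mathrm{id})(\delta\otimes\mathrm{id})\delta$, and $(\mathrm{id}\otimes\Delta)\delta(x)-(\delta\otimes\mathrm{id})\Delta(x)-(\tau\otimes\mathrm{id})(\mathrm{id}\otimes\delta)\Delta(x)=0$; (c) $\Delta(x\circ y)=(L(x)\otimes\mathrm{id})\Delta(y)+(\mathrm{id}\otimes L(y))\Delta(x)$; (d) $(A,[\cdot,\cdot],\delta)$ is a Malcev bialgebra, meaning the Malcev bialgebra compatibility conditions of Vershinin hold, which are equivalent to: $\mathrm{ad}_A^*$, $\mathrm{ad}_{A^*}^*$ being representations and the bracket $[x+\xi,y+\eta]=[x,y]+\mathrm{ad}_{A^*}^*(\xi)y-\mathrm{ad}_{A^*}^*(\eta)x+[\xi,\eta]^*+\mathrm{ad}_A^*(x)\eta-\mathrm{ad}_A^*(y)\xi$ on $A\oplus A^*$ being a Malcev bracket; (e) for all $x,y\in A$: $\delta(x\circ y)+(\mathrm{ad}(y)\otimes\mathrm{id})\Delta(x)-(\mathrm{id}\otimes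 L(x))\delta(y)+(\mathrm{ad}(x)\otimes\mathrm{id})\Delta(y)-(\mathrm{id}\otimes L(y))\delta(x)=0$ and $\Delta([x,y])-(L(y)\otimes\mathrm{id})\delta(x)-(\mathrm{id}\otimes\mathrm{ad}(x))\Delta(y)+(\mathrm{id}\otimes L(y))\delta(x)-(\mathrm{ad}(x)\otimes\mathrm{id})\Delta(y)=0$. Matched pair of Malcev-Poisson algebras $(A_1,A_2,\varrho_1,\mu_1,\varrho_2,\mu_2)$: $\mu_1,\mu_2$ associative representations with $\mu_1(x_1)(x_2\circ_2y_2)=(\mu_1(x_1)x_2)\circ_2y_2+\mu_1(\mu_2(x_2)x_1)y_2$, $\mu_2(x_2)(x_1\circ_1y_1)=(\mu_2(x_2)x_1)\circ_1y_1+\mu_2(\mu_1(x_1)x_2)y_1$; $\varrho_1,\varrho_2$ Malcev representations with $[x_1+x_2,y_1+y_2]=[x_1,y_1]_1+\varrho_2(x_2)y_1-\varrho_2(y_2)x_1+[x_2,y_2]_2+\varrho_1(x_1)y_2-\varrho_1(y_1)x_2$ a Malcev bracket on $A_1\oplus A_2$; $(A_2,\varrho_1,\mu_1)$, $(A_1,\varrho_2,\mu_2)$ Malcev-Poisson representations; and $\varrho_2(x_2)(x_1\circ_1y_1)=(\varrho_2(x_2)x_1)\circ_1y_1+x_1\circ_1(\varrho_2(x_2)y_1)-\mu_2(\varrho_1(x_1)x_2)y_1-\mu_2(\varrho_1(y_1)x_2)x_1$, $\varrho_1(x_1)(x_2\circ_2y_2)=(\varrho_1(x_1)x_2)\circ_2y_2+x_2\circ_2(\varrho_1(x_1)y_2)-\mu_1(\varrho_2(x_2)x_1)y_2-\mu_1(\varrho_2(y_2)x_1)x_2$,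 $[x_1,\mu_2(x_2)y_1]_1-\varrho_2(\mu_1(y_1)x_2)x_1=\mu_2(\varrho_1(x_1)x_2)y_1-(\varrho_2(x_2)x_1)\circ_1y_1+\mu_2(x_2)[x_1,y_1]_1$, $[x_2,\mu_1(x_1)y_2]_2-\varrho_1(\mu_2(y_2)x_1)x_2=\mu_1(\varrho_2(x_2)x_1)y_2-(\varrho_1(x_1)x_2)\circ_2y_2+\mu_1(x_1)[x_2,y_2]_2$. Standard Manin triple: a Malcev-Poisson structure on $A\oplus A^*$ with $A$, $A^*$ as Malcev-Poisson subalgebras and $\omega_d$ invariant: $\omega_d(u\circ v,w)=\omega_d(u,v\circ w)$, $\omega_d([u,v],w)=\omega_d(u,[v,w])$. *)

theory Defs
  imports "HOL-Computational_Algebra.Polynomial" "HOL-Library.Function_Algebras"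
begin

(* Finite-dimensional spaces are coordinate spaces  'i \<Rightarrow> 'k  with 'i finite
   (basis = standard basis).  A* is identified with 'n \<Rightarrow> 'k via the
   dual basis; A\<otimes>A with 'n \<Rightarrow> 'n \<Rightarrow> 'k, A\<otimes>A\<otimes>A with 'n \<Rightarrow> 'n \<Rightarrow> 'n \<Rightarrow> 'k, etc.
   Vector addition / subtraction / zero are pointwise (Function_Algebras). *)

definition smult_v :: "'k::field \<Rightarrow> ('i \<Rightarrow> 'k) \<Rightarrow> ('i \<Rightarrow> 'k)" where
  "smult_v c x = (\<lambda>i. c * x i)"

definition bvec :: "'i \<Rightarrow> ('i \<Rightarrow> 'k::field)" where
  "bvec a = (\<lambda>i. if i = a then 1 else 0)"

definition pairing :: "('i::finite \<Rightarrow> 'k::field) \<Rightarrow> ('i \<Rightarrow> 'k) \<Rightarrow> 'k" where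
  "pairing u v = (\<Sum>i\<in>UNIV. u i * v i)"

definition lin :: "(('a \<Rightarrow> 'k::field) \<Rightarrow> ('b \<Rightarrow> 'k)) \<Rightarrow> bool" where
  "lin f \<longleftrightarrow> (\<forall>x y. f (x + y) = f x + f y) \<and> (\<forall>c x. f (smult_v c x) = smult_v c (f x))"

definition bilin :: "(('a \<Rightarrow> 'k::field) \<Rightarrow> ('b \<Rightarrow> 'k) \<Rightarrow> ('c \<Rightarrow> 'k)) \<Rightarrow> bool" where
  "bilin b \<longleftrightarrow> (\<forall>x. lin (b x)) \<and> (\<forall>y. lin (\<lambda>x. b x y))"

definition lin2 :: "(('a \<Rightarrow> 'k::field) \<Rightarrow> ('b \<Rightarrow> 'b \<Rightarrow> 'k)) \<Rightarrow> bool" where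
  "lin2 F \<longleftrightarrow> (\<forall>x y. F (x + y) = F x + F y) \<and> (\<forall>c x. F (smult_v c x) = (\<lambda>i j. c * F x i j))"

definition jacobiator :: "(('i \<Rightarrow> 'k::field) \<Rightarrow> ('i \<Rightarrow> 'k) \<Rightarrow> ('i \<Rightarrow> 'k)) \<Rightarrow> ('i \<Rightarrow> 'k) \<Rightarrow> ('i \<Rightarrow> 'k) \<Rightarrow> ('i \<Rightarrow> 'k) \<Rightarrow> ('i \<Rightarrow> 'k)" where
  "jacobiator br x y z = br (br x y) z + br (br z x) y + br (br y z) x"

definition malcev_alg :: "(('i \<Rightarrow> 'k::field) \<Rightarrow> ('i \<Rightarrow> 'k) \<Rightarrow> ('i \<Rightarrow> 'k)) \<Rightarrow> bool" where
  "malcev_alg br \<longleftrightarrow> bilin br \<and> (\<forall>x y. br x y = - br y x) \<and>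
     (\<forall>x y z. jacobiator br x y (br x z) = br (jacobiator br x y z) x)"

definition malcev_poisson_alg :: "(('i \<Rightarrow> 'k::field) \<Rightarrow> ('i \<Rightarrow> 'k) \<Rightarrow> ('i \<Rightarrow> 'k)) \<Rightarrow> (('i \<Rightarrow> 'k) \<Rightarrow> ('i \<Rightarrow> 'k) \<Rightarrow> ('i \<Rightarrow> 'k)) \<Rightarrow> bool" where
  "malcev_poisson_alg br pr \<longleftrightarrow> malcev_alg br \<and> bilin pr \<and>
     (\<forall>x y. pr x y = pr y x) \<and> (\<forall>x y z. pr (pr x y) z = pr x (pr y z)) \<and>
     (\<forall>x y z. br x (pr y z) = pr (br x y) z + pr y (br x z))"

definition malcev_rep :: "(('i \<Rightarrow> 'k::field) \<Rightarrow> ('i \<Rightarrow> 'k) \<Rightarrow> ('i \<Rightarrow> 'k)) \<Rightarrow> (('i \<Rightarrow> 'k) \<Rightarrow> ('j \<Rightarrow> 'k) \<Rightarrow> ('j \<Rightarrow> 'k)) \<Rightarrow> bool" where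
  "malcev_rep br rho \<longleftrightarrow> bilin rho \<and>
     (\<forall>x y z v. rho (br (br x y) z) v =
        rho z (rho y (rho x v)) - rho y (rho x (rho z v)) + rho x (rho (br y z) v) + rho (br x z) (rho y v))"

definition assoc_rep :: "(('i \<Rightarrow> 'k::field) \<Rightarrow> ('i \<Rightarrow> 'k) \<Rightarrow> ('i \<Rightarrow> 'k)) \<Rightarrow> (('i \<Rightarrow> 'k) \<Rightarrow> ('j \<Rightarrow> 'k) \<Rightarrow> ('j \<Rightarrow> 'k)) \<Rightarrow> bool" where
  "assoc_rep pr mu \<longleftrightarrow> bilin mu \<and> (\<forall>x y v. mu (pr x y) v = mu x (mu y v))"

definition mp_rep :: "(('i \<Rightarrow> 'k::field) \<Rightarrow> ('i \<Rightarrow> 'k) \<Rightarrow> ('i \<Rightarrow> 'k)) \<Rightarrow> (('i \<Rightarrow> 'k) \<Rightarrow> ('i \<Rightarrow> 'k) \<Rightarrow> ('i \<Rightarrow> 'k))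
     \<Rightarrow> (('i \<Rightarrow> 'k) \<Rightarrow> ('j \<Rightarrow> 'k) \<Rightarrow> ('j \<Rightarrow> 'k)) \<Rightarrow> (('i \<Rightarrow> 'k) \<Rightarrow> ('j \<Rightarrow> 'k) \<Rightarrow> ('j \<Rightarrow> 'k)) \<Rightarrow> bool" where
  "mp_rep br pr rho mu \<longleftrightarrow> malcev_rep br rho \<and> assoc_rep pr mu \<and>
     (\<forall>x y v. rho (pr x y) v = mu y (rho x v) + mu x (rho y v)) \<and>
     (\<forall>x y v. mu (br x y) v = rho x (mu y v) - mu y (rho x v))"

definition inl_v :: "('i \<Rightarrow> 'k::zero) \<Rightarrow> ('i + 'j \<Rightarrow> 'k)" where
  "inl_v x = (\<lambda>s. case s of Inl i \<Rightarrow> x i | Inr _ \<Rightarrow> 0)"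

definition inr_v :: "('j \<Rightarrow> 'k::zero) \<Rightarrow> ('i + 'j \<Rightarrow> 'k)" where
  "inr_v x = (\<lambda>s. case s of Inl _ \<Rightarrow> 0 | Inr j \<Rightarrow> x j)"

definition projl :: "('i + 'j \<Rightarrow> 'k) \<Rightarrow> ('i \<Rightarrow> 'k)" where
  "projl u = (\<lambda>i. u (Inl i))"

definition projr :: "('i + 'j \<Rightarrow> 'k) \<Rightarrow> ('j \<Rightarrow> 'k)" where
  "projr u = (\<lambda>j. u (Inr j))"

definition mp_bracket ::
  "(('i \<Rightarrow> 'k::field) \<Rightarrow> ('i \<Rightarrow> 'k) \<Rightarrow> ('i \<Rightarrow> 'k)) \<Rightarrow> (('j \<Rightarrow> 'k) \<Rightarrow> ('j \<Rightarrow> 'k) \<Rightarrow> ('j \<Rightarrow> 'k))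
   \<Rightarrow> (('i \<Rightarrow> 'k) \<Rightarrow> ('j \<Rightarrow> 'k) \<Rightarrow> ('j \<Rightarrow> 'k)) \<Rightarrow> (('j \<Rightarrow> 'k) \<Rightarrow> ('i \<Rightarrow> 'k) \<Rightarrow> ('i \<Rightarrow> 'k))
   \<Rightarrow> ('i + 'j \<Rightarrow> 'k) \<Rightarrow> ('i + 'j \<Rightarrow> 'k) \<Rightarrow> ('i + 'j \<Rightarrow> 'k)" where
  "mp_bracket br1 br2 rho1 rho2 u v =
     inl_v (br1 (projl u) (projl v) + rho2 (projr u) (projl v) - rho2 (projr v) (projl u))
   + inr_v (br2 (projr u) (projr v) + rho1 (projl u) (projr v) - rho1 (projl v) (projr u))"

definition matched_pair ::
  "(('i \<Rightarrow> 'k::field) \<Rightarrow> ('i \<Rightarrow> 'k) \<Rightarrow> ('i \<Rightarrow> 'k)) \<Rightarrow> (('i \<Rightarrow> 'k) \<Rightarrow> ('i \<Rightarrow> 'k) \<Rightarrow> ('i \<Rightarrow> 'k))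
   \<Rightarrow> (('j \<Rightarrow> 'k) \<Rightarrow> ('j \<Rightarrow> 'k) \<Rightarrow> ('j \<Rightarrow> 'k)) \<Rightarrow> (('j \<Rightarrow> 'k) \<Rightarrow> ('j \<Rightarrow> 'k) \<Rightarrow> ('j \<Rightarrow> 'k))
   \<Rightarrow> (('i \<Rightarrow> 'k) \<Rightarrow> ('j \<Rightarrow> 'k) \<Rightarrow> ('j \<Rightarrow> 'k)) \<Rightarrow> (('i \<Rightarrow> 'k) \<Rightarrow> ('j \<Rightarrow> 'k) \<Rightarrow> ('j \<Rightarrow> 'k))
   \<Rightarrow> (('j \<Rightarrow> 'k) \<Rightarrow> ('i \<Rightarrow> 'k) \<Rightarrow> ('i \<Rightarrow> 'k)) \<Rightarrow> (('j \<Rightarrow> 'k) \<Rightarrow> ('i \<Rightarrow> 'k) \<Rightarrow> ('i \<Rightarrow> 'k)) \<Rightarrow> bool" where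
  "matched_pair br1 pr1 br2 pr2 rho1 mu1 rho2 mu2 \<longleftrightarrow>
     malcev_poisson_alg br1 pr1 \<and> malcev_poisson_alg br2 pr2 \<and>
     assoc_rep pr1 mu1 \<and> assoc_rep pr2 mu2 \<and>
     (\<forall>x1 x2 y2. mu1 x1 (pr2 x2 y2) = pr2 (mu1 x1 x2) y2 + mu1 (mu2 x2 x1) y2) \<and>
     (\<forall>x2 x1 y1. mu2 x2 (pr1 x1 y1) = pr1 (mu2 x2 x1) y1 + mu2 (mu1 x1 x2) y1) \<and>
     malcev_rep br1 rho1 \<and> malcev_rep br2 rho2 \<and>
     malcev_alg (mp_bracket br1 br2 rho1 rho2) \<and>
     mp_rep br1 pr1 rho1 mu1 \<and> mp_rep br2 pr2 rho2 mu2 \<and>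
     (\<forall>x2 x1 y1. rho2 x2 (pr1 x1 y1) = pr1 (rho2 x2 x1) y1 + pr1 x1 (rho2 x2 y1)
                    - mu2 (rho1 x1 x2) y1 - mu2 (rho1 y1 x2) x1) \<and>
     (\<forall>x1 x2 y2. rho1 x1 (pr2 x2 y2) = pr2 (rho1 x1 x2) y2 + pr2 x2 (rho1 x1 y2)
                    - mu1 (rho2 x2 x1) y2 - mu1 (rho2 y2 x1) x2) \<and>
     (\<forall>x1 x2 y1. br1 x1 (mu2 x2 y1) - rho2 (mu1 y1 x2) x1
                  = mu2 (rho1 x1 x2) y1 - pr1 (rho2 x2 x1) y1 + mu2 x2 (br1 x1 y1)) \<and>
     (\<forall>x2 x1 y2. br2 x2 (mu1 x1 y2) - rho1 (mu2 y2 x1) x2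
                  = mu1 (rho2 x2 x1) y2 - pr2 (rho1 x1 x2) y2 + mu1 x1 (br2 x2 y2))"

(* <theta^*(x) xi, v> = - <xi, theta(x) v> *)
definition coad :: "('a \<Rightarrow> ('i \<Rightarrow> 'k) \<Rightarrow> ('i \<Rightarrow> 'k)) \<Rightarrow> 'a \<Rightarrow> ('i::finite \<Rightarrow> 'k::field) \<Rightarrow> ('i \<Rightarrow> 'k)" where
  "coad theta x xi = (\<lambda>k. - pairing xi (theta x (bvec k)))"

(* operation on A* dual to a comultiplication D : A \<rightarrow> A\<otimes>A :  <D^*(xi\<otimes>eta), x> = <xi\<otimes>eta, D x> *)
definition dual_op :: "(('n::finite \<Rightarrow> 'k::field) \<Rightarrow> ('n \<Rightarrow> 'n \<Rightarrow> 'k)) \<Rightarrow> ('n \<Rightarrow> 'k) \<Rightarrow> ('n \<Rightarrow> 'k) \<Rightarrow> ('n \<Rightarrow> 'k)" where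
  "dual_op D xi eta = (\<lambda>k. \<Sum>i\<in>UNIV. \<Sum>j\<in>UNIV. xi i * eta j * D (bvec k) i j)"

definition tens2 :: "(('n::finite \<Rightarrow> 'k::field) \<Rightarrow> ('n \<Rightarrow> 'k)) \<Rightarrow> (('n \<Rightarrow> 'k) \<Rightarrow> ('n \<Rightarrow> 'k)) \<Rightarrow> ('n \<Rightarrow> 'n \<Rightarrow> 'k) \<Rightarrow> ('n \<Rightarrow> 'n \<Rightarrow> 'k)" where
  "tens2 f g T = (\<lambda>i j. \<Sum>a\<in>UNIV. \<Sum>b\<in>UNIV. T a b * f (bvec a) i * g (bvec b) j)"

definition swap2 :: "('n \<Rightarrow> 'n \<Rightarrow> 'k) \<Rightarrow> ('n \<Rightarrow> 'n \<Rightarrow> 'k)" where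
  "swap2 T = (\<lambda>i j. T j i)"

definition tens_F_id :: "(('n::finite \<Rightarrow> 'k::field) \<Rightarrow> ('n \<Rightarrow> 'n \<Rightarrow> 'k)) \<Rightarrow> ('n \<Rightarrow> 'n \<Rightarrow> 'k) \<Rightarrow> ('n \<Rightarrow> 'n \<Rightarrow> 'n \<Rightarrow> 'k)" where
  "tens_F_id F T = (\<lambda>i j k. \<Sum>a\<in>UNIV. T a k * F (bvec a) i j)"

definition tens_id_F :: "(('n::finite \<Rightarrow> 'k::field) \<Rightarrow> ('n \<Rightarrow> 'n \<Rightarrow> 'k)) \<Rightarrow> ('n \<Rightarrow> 'n \<Rightarrow> 'k) \<Rightarrow> ('n \<Rightarrow> 'n \<Rightarrow> 'n \<Rightarrow> 'k)" where
  "tens_id_F F T = (\<lambda>i j k. \<Sum>b\<in>UNIV. T i b * F (bvec b) j k)"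

definition tens_F_id_id :: "(('n::finite \<Rightarrow> 'k::field) \<Rightarrow> ('n \<Rightarrow> 'n \<Rightarrow> 'k)) \<Rightarrow> ('n \<Rightarrow> 'n \<Rightarrow> 'n \<Rightarrow> 'k) \<Rightarrow> ('n \<Rightarrow> 'n \<Rightarrow> 'n \<Rightarrow> 'n \<Rightarrow> 'k)" where
  "tens_F_id_id F T = (\<lambda>i j k l. \<Sum>a\<in>UNIV. T a k l * F (bvec a) i j)"

definition tens_F_G :: "(('n::finite \<Rightarrow> 'k::field) \<Rightarrow> ('n \<Rightarrow> 'n \<Rightarrow> 'k)) \<Rightarrow> (('n \<Rightarrow> 'k) \<Rightarrow> ('n \<Rightarrow> 'n \<Rightarrow> 'k)) \<Rightarrow> ('n \<Rightarrow> 'n \<Rightarrow> 'k) \<Rightarrow> ('n \<Rightarrow> 'n \<Rightarrow> 'n \<Rightarrow> 'n \<Rightarrow> 'k)" where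
  "tens_F_G F G T = (\<lambda>i j k l. \<Sum>a\<in>UNIV. \<Sum>b\<in>UNIV. T a b * F (bvec a) i j * G (bvec b) k l)"

definition tau_id :: "('n \<Rightarrow> 'n \<Rightarrow> 'n \<Rightarrow> 'k) \<Rightarrow> ('n \<Rightarrow> 'n \<Rightarrow> 'n \<Rightarrow> 'k)" where
  "tau_id T = (\<lambda>i j k. T j i k)"

definition id_tau_id :: "('n \<Rightarrow> 'n \<Rightarrow> 'n \<Rightarrow> 'n \<Rightarrow> 'k) \<Rightarrow> ('n \<Rightarrow> 'n \<Rightarrow> 'n \<Rightarrow> 'n \<Rightarrow> 'k)" where
  "id_tau_id T = (\<lambda>i j k l. T i k j l)"

(* sigma(x\<otimes>y\<otimes>z\<otimes>t) = y\<otimes>z\<otimes>t\<otimes>x *)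
definition sigma4 :: "('n \<Rightarrow> 'n \<Rightarrow> 'n \<Rightarrow> 'n \<Rightarrow> 'k) \<Rightarrow> ('n \<Rightarrow> 'n \<Rightarrow> 'n \<Rightarrow> 'n \<Rightarrow> 'k)" where
  "sigma4 T = (\<lambda>i j k l. T l i j k)"

definition mp_coalg :: "(('n::finite \<Rightarrow> 'k::field) \<Rightarrow> ('n \<Rightarrow> 'n \<Rightarrow> 'k)) \<Rightarrow> (('n \<Rightarrow> 'k) \<Rightarrow> ('n \<Rightarrow> 'n \<Rightarrow> 'k)) \<Rightarrow> bool" where
  "mp_coalg Delta delta \<longleftrightarrow> lin2 Delta \<and> lin2 delta \<and>
     (\<forall>x. swap2 (Delta x) = Delta x) \<and>
     (\<forall>x. tens_id_F Delta (Delta x) = tens_F_id Delta (Delta x)) \<and>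
     (\<forall>x. swap2 (delta x) = - delta x) \<and>
     (\<forall>x. let Q = tens_F_id_id delta (tens_F_id delta (delta x)) in
          id_tau_id (tens_F_G delta delta (delta x))
            = Q + sigma4 Q + sigma4 (sigma4 Q) + sigma4 (sigma4 (sigma4 Q))) \<and>
     (\<forall>x. tens_id_F Delta (delta x) - tens_F_id delta (Delta x) - tau_id (tens_id_F delta (Delta x)) = 0)"

(* Malcev bialgebra (A, [,], delta), in the equivalent form given in the context *)
definition malcev_bialg :: "(('n::finite \<Rightarrow> 'k::field) \<Rightarrow> ('n \<Rightarrow> 'k) \<Rightarrow> ('n \<Rightarrow> 'k)) \<Rightarrow> (('n \<Rightarrow> 'k) \<Rightarrow> ('n \<Rightarrow> 'n \<Rightarrow> 'k)) \<Rightarrow> bool" where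
  "malcev_bialg br delta \<longleftrightarrow>
     malcev_rep br (coad br) \<and> malcev_rep (dual_op delta) (coad (dual_op delta)) \<and>
     malcev_alg (mp_bracket br (dual_op delta) (coad br) (coad (dual_op delta)))"

definition mp_bialg :: "(('n::finite \<Rightarrow> 'k::field) \<Rightarrow> ('n \<Rightarrow> 'k) \<Rightarrow> ('n \<Rightarrow> 'k)) \<Rightarrow> (('n \<Rightarrow> 'k) \<Rightarrow> ('n \<Rightarrow> 'k) \<Rightarrow> ('n \<Rightarrow> 'k))
     \<Rightarrow> (('n \<Rightarrow> 'k) \<Rightarrow> ('n \<Rightarrow> 'n \<Rightarrow> 'k)) \<Rightarrow> (('n \<Rightarrow> 'k) \<Rightarrow> ('n \<Rightarrow> 'n \<Rightarrow> 'k)) \<Rightarrow> bool" where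
  "mp_bialg br pr Delta delta \<longleftrightarrow>
     malcev_poisson_alg br pr \<and>
     mp_coalg Delta delta \<and>
     (\<forall>x y. Delta (pr x y) = tens2 (pr x) id (Delta y) + tens2 id (pr y) (Delta x)) \<and>
     malcev_bialg br delta \<and>
     (\<forall>x y. delta (pr x y) + tens2 (br y) id (Delta x) - tens2 id (pr x) (delta y)
              + tens2 (br x) id (Delta y) - tens2 id (pr y) (delta x) = 0) \<and>
     (\<forall>x y. Delta (br x y) - tens2 (pr y) id (delta x) - tens2 id (br x) (Delta y)
              + tens2 id (pr y) (delta x) - tens2 (br x) id (Delta y) = 0)"

definition omega_d :: "('n::finite + 'n \<Rightarrow> 'k) \<Rightarrow> ('n + 'n \<Rightarrow> 'k) \<Rightarrow> 'k::{field}" where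
  "omega_d u v = pairing (projl u) (projr v) + pairing (projr u) (projl v)"

definition std_manin_triple :: "(('n::finite \<Rightarrow> 'k::field) \<Rightarrow> ('n \<Rightarrow> 'k) \<Rightarrow> ('n \<Rightarrow> 'k)) \<Rightarrow> (('n \<Rightarrow> 'k) \<Rightarrow> ('n \<Rightarrow> 'k) \<Rightarrow> ('n \<Rightarrow> 'k))
     \<Rightarrow> (('n \<Rightarrow> 'k) \<Rightarrow> ('n \<Rightarrow> 'k) \<Rightarrow> ('n \<Rightarrow> 'k)) \<Rightarrow> (('n \<Rightarrow> 'k) \<Rightarrow> ('n \<Rightarrow> 'k) \<Rightarrow> ('n \<Rightarrow> 'k)) \<Rightarrow> bool" where
  "std_manin_triple br pr brd prd \<longleftrightarrow>
     (\<exists>brS prS :: ('n + 'n \<Rightarrow> 'k) \<Rightarrow> ('n + 'n \<Rightarrow> 'k) \<Rightarrow> ('n + 'n \<Rightarrow> 'k).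
        malcev_poisson_alg brS prS \<and>
        (\<forall>x y. brS (inl_v x) (inl_v y) = inl_v (br x y) \<and> prS (inl_v x) (inl_v y) = inl_v (pr x y)) \<and>
        (\<forall>xi eta. brS (inr_v xi) (inr_v eta) = inr_v (brd xi eta) \<and> prS (inr_v xi) (inr_v eta) = inr_v (prd xi eta)) \<and>
        (\<forall>u v w. omega_d (prS u v) w = omega_d u (prS v w)) \<and>
        (\<forall>u v w. omega_d (brS u v) w = omega_d u (brS v w)))"

end

theory Submission
  imports Defs
begin

(*
  Under the standing hypotheses most of what (1)-(3) demand holds automatically: the coalgebra
  axioms of (A, Delta, delta) are transposes of the Malcev-Poisson axioms of A*, and the coadjoint
  maps ad* and -L* of A and of A* are Malcev-Poisson representations (for ad* this rests on
  Sagle's identity, which in characteristic 0 is a combination of polarized Malcev identities).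
  Pairing the remaining compatibility conditions of (1) and of (2) with test vectors and moving
  every coadjoint action onto the dual arguments turns both lists into the same three scalar
  identities; besides these, (1) and (2) both ask that the bracket on A + A* be Malcev.
  For (3), invariance of omega_d together with (anti)symmetry forces the mixed products and
  brackets of a standard Manin triple, so A + A* must carry the matched-pair double structure,
  whose associativity and Leibniz rule, checked summand by summand, are again the three identities.
*)

section \<open>Coordinates, pairings and tensors\<close>

lemma sum_fun_apply: "(\<Sum>a\<in>S. f a) x = (\<Sum>a\<in>S. f a x)"
  by (induction S rule: infinite_finite_induct) auto

lemma pairing_bvec_left [simp]: "pairing (bvec k) v = v k"
  by (simp add: pairing_def bvec_def of_bool_def[symmetric])

lemma pairing_bvec_right [simp]: "pairing v (bvec k) = v k"
  by (simp add: pairing_def bvec_def of_bool_def[symmetric])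

lemma pairing_commute: "pairing u v = pairing v u"
  by (simp add: pairing_def mult.commute)

lemma pairing_add_left [simp]: "pairing (u + w) v = pairing u v + pairing w v"
  and pairing_add_right [simp]: "pairing v (u + w) = pairing v u + pairing v w"
  and pairing_diff_left [simp]: "pairing (u - w) v = pairing u v - pairing w v"
  and pairing_diff_right [simp]: "pairing v (u - w) = pairing v u - pairing v w"
  and pairing_uminus_left [simp]: "pairing (- u) v = - pairing u v"
  and pairing_uminus_right [simp]: "pairing v (- u) = - pairing v u"
  and pairing_zero_left [simp]: "pairing 0 v = 0"
  and pairing_zero_right [simp]: "pairing v 0 = 0"
  and pairing_smult_left [simp]: "pairing (smult_v c u) v = c * pairing u v"
  and pairing_smult_right [simp]: "pairing v (smult_v c u) = c * pairing v u"
  by (simp_all add: pairing_def algebra_simps sum.distrib sum_subtractf sum_negf smult_v_def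
      sum_distrib_left)

lemma pairing_eqI: "(\<And>w. pairing u w = pairing v w) \<Longrightarrow> u = v"
  by (metis ext pairing_bvec_right)

lemma vec_eq_iff_pairing: "u = v \<longleftrightarrow> (\<forall>w. pairing u w = pairing v w)"
  by (metis ext pairing_bvec_right)

lemma vec_eq_iff_pairing': "u = v \<longleftrightarrow> (\<forall>w. pairing w u = pairing w v)"
  by (metis ext pairing_bvec_left)

lemma lin_add: "lin f \<Longrightarrow> f (x + y) = f x + f y"
  by (simp add: lin_def)

lemma lin_smult: "lin f \<Longrightarrow> f (smult_v c x) = smult_v c (f x)"
  by (simp add: lin_def)

lemma lin_zero: "lin f \<Longrightarrow> f 0 = 0"
  using lin_add[of f 0 0] by simp

lemma lin_uminus: "lin f \<Longrightarrow> f (- x) = - f x"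
  using lin_add[of f "- x" x] lin_zero[of f] by (simp add: eq_neg_iff_add_eq_0)

lemma lin_diff: "lin f \<Longrightarrow> f (x - y) = f x - f y"
  using lin_add[of f x "- y"] lin_uminus[of f y] by simp

lemma lin_sum: "lin f \<Longrightarrow> f (\<Sum>a\<in>S. g a) = (\<Sum>a\<in>S. f (g a))"
  by (induction S rule: infinite_finite_induct) (auto simp: lin_zero lin_add)

lemma lin_comp: "lin f \<Longrightarrow> lin g \<Longrightarrow> lin (\<lambda>u. f (g u))"
  by (simp add: lin_def)

lemma lin_coordinates:
  fixes x :: "'i::finite \<Rightarrow> 'k::field"
  shows "lin f \<Longrightarrow> f x j = (\<Sum>a\<in>UNIV. x a * f (bvec a) j)"
proof -
  assume f: "lin f"
  have "x = (\<Sum>a\<in>UNIV. smult_v (x a) (bvec a))"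
    by (rule ext) (simp add: sum_fun_apply smult_v_def bvec_def if_distrib[of "\<lambda>c. _ * c"] sum.delta' cong: if_cong)
  then have "f x = f (\<Sum>a\<in>UNIV. smult_v (x a) (bvec a))"
    by (rule arg_cong)
  also have "\<dots> = (\<Sum>a\<in>UNIV. smult_v (x a) (f (bvec a)))"
    using f by (simp add: lin_sum lin_smult)
  finally show ?thesis
    by (simp add: sum_fun_apply smult_v_def)
qed

lemma lin2_row: "lin2 F \<Longrightarrow> lin (\<lambda>x. F x i)"
  by (simp add: lin2_def lin_def smult_v_def)

lemma lin2_coordinates:
  fixes x :: "'i::finite \<Rightarrow> 'k::field"
  shows "lin2 F \<Longrightarrow> F x i j = (\<Sum>a\<in>UNIV. x a * F (bvec a) i j)"
  using lin_coordinates[OF lin2_row] .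

lemma pairing_transpose:
  assumes "lin f"
  shows "pairing (\<lambda>k. pairing z (f (bvec k))) y = pairing z (f y)"
proof -
  have "pairing z (f y) = (\<Sum>i\<in>UNIV. \<Sum>k\<in>UNIV. z i * f (bvec k) i * y k)"
    by (simp add: pairing_def lin_coordinates[OF assms, of y] sum_distrib_left mult_ac)
  also have "\<dots> = (\<Sum>k\<in>UNIV. \<Sum>i\<in>UNIV. z i * f (bvec k) i * y k)"
    by (rule sum.swap)
  finally show ?thesis
    by (simp add: pairing_def sum_distrib_right)
qed

lemma bilin_add_left: "bilin b \<Longrightarrow> b (x + y) z = b x z + b y z"
  using lin_add[of "\<lambda>u. b u z"] by (simp add: bilin_def)

lemma bilin_add_right: "bilin b \<Longrightarrow> b z (x + y) = b z x + b z y"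
  using lin_add[of "b z"] by (simp add: bilin_def)

lemma bilin_diff_left: "bilin b \<Longrightarrow> b (x - y) z = b x z - b y z"
  using lin_diff[of "\<lambda>u. b u z"] by (simp add: bilin_def)

lemma bilin_diff_right: "bilin b \<Longrightarrow> b z (x - y) = b z x - b z y"
  using lin_diff[of "b z"] by (simp add: bilin_def)

lemma bilin_uminus_left: "bilin b \<Longrightarrow> b (- x) z = - b x z"
  using lin_uminus[of "\<lambda>u. b u z"] by (simp add: bilin_def)

lemma bilin_uminus_right: "bilin b \<Longrightarrow> b z (- x) = - b z x"
  using lin_uminus[of "b z"] by (simp add: bilin_def)

lemma bilin_zero_left: "bilin b \<Longrightarrow> b 0 z = 0"
  using lin_zero[of "\<lambda>u. b u z"] by (simp add: bilin_def)

lemma bilin_zero_right: "bilin b \<Longrightarrow> b z 0 = 0"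
  using lin_zero[of "b z"] by (simp add: bilin_def)

lemma bilin_smult_left: "bilin b \<Longrightarrow> b (smult_v c x) z = smult_v c (b x z)"
  using lin_smult[of "\<lambda>u. b u z"] by (simp add: bilin_def)

lemma bilin_smult_right: "bilin b \<Longrightarrow> b z (smult_v c x) = smult_v c (b z x)"
  using lin_smult[of "b z"] by (simp add: bilin_def)

lemmas bilin_simps = bilin_add_left bilin_add_right bilin_diff_left bilin_diff_right
  bilin_uminus_left bilin_uminus_right bilin_zero_left bilin_zero_right

lemma bilin_lin_right: "bilin b \<Longrightarrow> lin (b x)"
  by (simp add: bilin_def)

lemma bilin_uminus: "bilin b \<Longrightarrow> bilin (\<lambda>x y. - b x y)"
  by (simp add: bilin_def lin_def lin_uminus) (simp add: smult_v_def fun_eq_iff)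

lemma pairing_coad_left:
  assumes "lin (\<theta> x)"
  shows "pairing (coad \<theta> x \<xi>) y = - pairing \<xi> (\<theta> x y)"
proof -
  have "coad \<theta> x \<xi> = - (\<lambda>k. pairing \<xi> (\<theta> x (bvec k)))"
    by (simp add: coad_def fun_Compl_def)
  then show ?thesis
    by (simp add: pairing_transpose[OF assms])
qed

lemma pairing_coad_right:
  "lin (\<theta> x) \<Longrightarrow> pairing y (coad \<theta> x \<xi>) = - pairing \<xi> (\<theta> x y)"
  by (simp add: pairing_commute[of y] pairing_coad_left)

lemma bilin_coad: "bilin \<theta> \<Longrightarrow> bilin (coad \<theta>)"
proof -
  assume b: "bilin \<theta>"
  have "lin (coad \<theta> x)" for x
    by (auto simp: lin_def coad_def smult_v_def fun_eq_iff simp flip: pairing_smult_left)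
  moreover have "lin (\<lambda>x. coad \<theta> x \<xi>)" for \<xi>
    by (auto simp: lin_def coad_def fun_eq_iff bilin_add_left[OF b] bilin_smult_left[OF b])
      (simp add: smult_v_def)
  ultimately show ?thesis
    by (simp add: bilin_def)
qed

lemma dual_op_bvec: "dual_op D (bvec i) (bvec j) k = D (bvec k) i j"
proof -
  have "dual_op D a b k = pairing a (\<lambda>i. pairing b (D (bvec k) i))" for a b
    by (simp add: dual_op_def pairing_def sum_distrib_left mult.assoc)
  then show ?thesis
    by simp
qed

lemma comult_coordinates: "lin2 D \<Longrightarrow> D x i j = pairing (dual_op D (bvec i) (bvec j)) x"
  by (simp add: lin2_coordinates[of D x] dual_op_bvec pairing_def mult.commute)

definition tpairing :: "('n::finite \<Rightarrow> 'n \<Rightarrow> 'k::field) \<Rightarrow> ('n \<Rightarrow> 'k) \<Rightarrow> ('n \<Rightarrow> 'k) \<Rightarrow> 'k" where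
  "tpairing T a b = (\<Sum>i\<in>UNIV. \<Sum>j\<in>UNIV. a i * b j * T i j)"

lemma tpairing_bvec: "tpairing T (bvec i) (bvec j) = T i j"
proof -
  have "tpairing T a b = pairing a (\<lambda>i. pairing b (T i))" for a b
    by (simp add: tpairing_def pairing_def sum_distrib_left mult.assoc)
  then show ?thesis
    by simp
qed

lemma tensor_eq_iff_tpairing: "T = T' \<longleftrightarrow> (\<forall>a b. tpairing T a b = tpairing T' a b)"
  by (metis ext tpairing_bvec)

lemma tpairing_add [simp]: "tpairing (T + T') a b = tpairing T a b + tpairing T' a b"
  by (simp add: tpairing_def distrib_left sum.distrib)

lemma tpairing_diff [simp]: "tpairing (T - T') a b = tpairing T a b - tpairing T' a b"
  by (simp add: tpairing_def right_diff_distrib sum_subtractf)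

lemma tpairing_zero [simp]: "tpairing 0 a b = 0"
  by (simp add: tpairing_def)

lemma tensor_eq_0_iff_tpairing: "T = 0 \<longleftrightarrow> (\<forall>a b. tpairing T a b = 0)"
  by (simp add: tensor_eq_iff_tpairing[of T 0])

lemma tpairing_comult:
  assumes "lin2 D"
  shows "tpairing (D x) a b = pairing (dual_op D a b) x"
proof -
  have "tpairing (D x) a b = (\<Sum>i\<in>UNIV. \<Sum>j\<in>UNIV. \<Sum>k\<in>UNIV. a i * b j * D (bvec k) i j * x k)"
    by (simp add: tpairing_def lin2_coordinates[OF assms, of x] sum_distrib_left mult_ac)
  also have "\<dots> = (\<Sum>k\<in>UNIV. \<Sum>i\<in>UNIV. \<Sum>j\<in>UNIV. a i * b j * D (bvec k) i j * x k)"
    by (subst sum.swap, rule sum.cong[OF refl], rule sum.swap)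
  finally show ?thesis
    by (simp add: pairing_def dual_op_def sum_distrib_right)
qed

lemma sum_swap_pairs:
  "(\<Sum>i\<in>A. \<Sum>j\<in>B. \<Sum>p\<in>C. \<Sum>q\<in>D. f i j p q) = (\<Sum>p\<in>C. \<Sum>q\<in>D. \<Sum>i\<in>A. \<Sum>j\<in>B. f i j p q)"
proof -
  have "(\<Sum>i\<in>A. \<Sum>j\<in>B. \<Sum>p\<in>C. \<Sum>q\<in>D. f i j p q) = (\<Sum>i\<in>A. \<Sum>p\<in>C. \<Sum>j\<in>B. \<Sum>q\<in>D. f i j p q)"
    by (rule sum.cong[OF refl], rule sum.swap)
  also have "\<dots> = (\<Sum>i\<in>A. \<Sum>p\<in>C. \<Sum>q\<in>D. \<Sum>j\<in>B. f i j p q)"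
    by (rule sum.cong[OF refl], rule sum.cong[OF refl], rule sum.swap)
  also have "\<dots> = (\<Sum>p\<in>C. \<Sum>i\<in>A. \<Sum>q\<in>D. \<Sum>j\<in>B. f i j p q)"
    by (rule sum.swap)
  also have "\<dots> = (\<Sum>p\<in>C. \<Sum>q\<in>D. \<Sum>i\<in>A. \<Sum>j\<in>B. f i j p q)"
    by (rule sum.cong[OF refl], rule sum.swap)
  finally show ?thesis .
qed

lemma tpairing_tens2:
  "tpairing (tens2 f g T) a b =
     tpairing T (\<lambda>p. pairing a (f (bvec p))) (\<lambda>q. pairing b (g (bvec q)))"
proof -
  have "tpairing (tens2 f g T) a b =
      (\<Sum>i\<in>UNIV. \<Sum>j\<in>UNIV. \<Sum>p\<in>UNIV. \<Sum>q\<in>UNIV. a i * b j * T p q * f (bvec p) i * g (bvec q) j)"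
    by (simp add: tpairing_def tens2_def sum_distrib_left mult_ac)
  also have "\<dots> = (\<Sum>p\<in>UNIV. \<Sum>q\<in>UNIV. \<Sum>i\<in>UNIV. \<Sum>j\<in>UNIV. a i * b j * T p q * f (bvec p) i * g (bvec q) j)"
    by (rule sum_swap_pairs)
  also have "\<dots> = (\<Sum>p\<in>UNIV. \<Sum>q\<in>UNIV. \<Sum>j\<in>UNIV. \<Sum>i\<in>UNIV. a i * b j * T p q * f (bvec p) i * g (bvec q) j)"
    by (rule sum.cong[OF refl], rule sum.cong[OF refl], rule sum.swap)
  finally show ?thesis
    by (simp add: tpairing_def pairing_def sum_distrib_left sum_distrib_right mult_ac)
qed

lemma transpose_coad: "(\<lambda>p. pairing a (\<theta> x (bvec p))) = - coad \<theta> x a"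
  by (simp add: coad_def fun_eq_iff)

lemma transpose_id: "(\<lambda>p. pairing a (id (bvec p))) = a"
  by (simp add: fun_eq_iff)

section \<open>Identities in Malcev algebras\<close>

definition malcev_polarized ::
  "(('i \<Rightarrow> 'k::field) \<Rightarrow> ('i \<Rightarrow> 'k) \<Rightarrow> ('i \<Rightarrow> 'k))
   \<Rightarrow> ('i \<Rightarrow> 'k) \<Rightarrow> ('i \<Rightarrow> 'k) \<Rightarrow> ('i \<Rightarrow> 'k) \<Rightarrow> ('i \<Rightarrow> 'k) \<Rightarrow> ('i \<Rightarrow> 'k)" where
  "malcev_polarized br x w y z =
     jacobiator br x y (br w z) + jacobiator br w y (br x z)
     - br (jacobiator br x y z) w - br (jacobiator br w y z) x"

lemma malcev_polarized_eq_0: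
  assumes "malcev_alg br"
  shows "malcev_polarized br x w y z = 0"
proof -
  have b: "bilin br" and malcev_id: "\<And>u. jacobiator br u y (br u z) = br (jacobiator br u y z) u"
    using assms unfolding malcev_alg_def by blast+
  have "malcev_polarized br x w y z =
      (jacobiator br (x + w) y (br (x + w) z) - br (jacobiator br (x + w) y z) (x + w))
      - (jacobiator br x y (br x z) - br (jacobiator br x y z) x)
      - (jacobiator br w y (br w z) - br (jacobiator br w y z) w)"
    unfolding malcev_polarized_def jacobiator_def
    by (simp only: bilin_add_left[OF b] bilin_add_right[OF b]) (simp add: algebra_simps)
  then show ?thesis
    by (simp only: malcev_id) simp
qed

lemma fun_double_eq_0_imp:
  fixes v :: "'i \<Rightarrow> 'k::field_char_0"
  shows "v + v = 0 \<Longrightarrow> v = 0"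
  by (simp add: fun_eq_iff flip: mult_2)

lemma sagle_identity:
  fixes br :: "('i \<Rightarrow> 'k::field_char_0) \<Rightarrow> ('i \<Rightarrow> 'k) \<Rightarrow> ('i \<Rightarrow> 'k)"
  assumes "malcev_alg br"
  shows "br (br a c) (br b d) =
    br (br (br a b) c) d + br (br (br d a) b) c + br (br (br c d) a) b + br (br (br b c) d) a"
proof -
  have b: "bilin br" and anti: "\<And>x y. br x y = - br y x"
    using assms unfolding malcev_alg_def by blast+
  let ?S = "br (br a c) (br b d) - br (br (br a b) c) d - br (br (br d a) b) c
    - br (br (br c d) a) b - br (br (br b c) d) a"
  have "?S + ?S = malcev_polarized br a b c d - malcev_polarized br a c d b + malcev_polarized br a d b c"
    \<comment> \<open>each bracket occurring in both orders is oriented one way, so that both sides normalize alike\<close>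
    unfolding malcev_polarized_def jacobiator_def
    by (simp only: bilin_simps[OF b]
      anti[of b a] anti[of c a] anti[of c b] anti[of d a] anti[of d b] anti[of d c]
      anti[of "br a b" c] anti[of "br a b" d] anti[of "br a c" b] anti[of "br a c" d]
      anti[of "br a d" b] anti[of "br a d" c] anti[of "br a (br b c)" d]
      anti[of "br a (br b d)" c] anti[of "br a (br c d)" b] anti[of "br b c" a]
      anti[of "br b c" d] anti[of "br b c" "br a d"] anti[of "br b d" a] anti[of "br b d" c]
      anti[of "br b d" "br a c"] anti[of "br b (br a c)" d] anti[of "br b (br a d)" c]
      anti[of "br b (br c d)" a] anti[of "br c d" a] anti[of "br c d" b]
      anti[of "br c d" "br a b"] anti[of "br c (br a b)" d] anti[of "br c (br a d)" b]
      anti[of "br c (br b d)" a] anti[of "br d (br a b)" c] anti[of "br d (br a c)" b]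
      anti[of "br d (br b c)" a])
      (simp add: algebra_simps)
  also have "\<dots> = 0"
    by (simp add: malcev_polarized_eq_0[OF assms])
  finally have "?S = 0"
    by (rule fun_double_eq_0_imp)
  then show ?thesis
    by (simp add: algebra_simps)
qed

lemma malcev_ad_identity:
  fixes br :: "('i \<Rightarrow> 'k::field_char_0) \<Rightarrow> ('i \<Rightarrow> 'k) \<Rightarrow> ('i \<Rightarrow> 'k)"
  assumes "malcev_alg br"
  shows "br (br (br a b) c) d =
    br a (br b (br c d)) - br c (br a (br b d)) - br (br b c) (br a d) - br b (br (br a c) d)"
proof -
  have b: "bilin br" and anti: "\<And>x y. br x y = - br y x"
    using assms unfolding malcev_alg_def by blast+
  show ?thesis
    using sagle_identity[OF assms, of b c a d]
    by (simp add: bilin_uminus_left[OF b] bilin_uminus_right[OF b] anti[of b a]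
        anti[of b "br c d"] anti[of a "br (br c d) b"] anti[of b d] anti[of a "br d b"]
        anti[of c "br (br d b) a"] anti[of b "br (br a c) d"])
qed

lemma coad_malcev_rep:
  fixes br :: "('i::finite \<Rightarrow> 'k::field_char_0) \<Rightarrow> ('i \<Rightarrow> 'k) \<Rightarrow> ('i \<Rightarrow> 'k)"
  assumes "malcev_alg br"
  shows "malcev_rep br (coad br)"
proof -
  have b: "bilin br"
    using assms unfolding malcev_alg_def by blast
  have "coad br (br (br x y) z) v =
      coad br z (coad br y (coad br x v)) - coad br y (coad br x (coad br z v))
      + coad br x (coad br (br y z) v) + coad br (br x z) (coad br y v)" for x y z v
    by (rule pairing_eqI)
      (simp add: pairing_coad_left bilin_lin_right[OF b] malcev_ad_identity[OF assms, of x y z])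
  then show ?thesis
    by (simp add: malcev_rep_def bilin_coad[OF b])
qed

section \<open>Coadjoint representations of a Malcev-Poisson algebra\<close>

locale mp_algebra =
  fixes br pr :: "('n::finite \<Rightarrow> 'k::field_char_0) \<Rightarrow> ('n \<Rightarrow> 'k) \<Rightarrow> ('n \<Rightarrow> 'k)"
  assumes malcev_poisson: "malcev_poisson_alg br pr"
begin

lemma malcev: "malcev_alg br"
  using malcev_poisson by (simp add: malcev_poisson_alg_def)

lemma bilin_br: "bilin br"
  using malcev by (simp add: malcev_alg_def)

lemma bilin_pr: "bilin pr"
  using malcev_poisson by (simp add: malcev_poisson_alg_def)

lemma br_antisym: "br x y = - br y x"
  using malcev unfolding malcev_alg_def by blast

lemma pr_commute: "pr x y = pr y x"
  using malcev_poisson unfolding malcev_poisson_alg_def by blast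

lemma pr_assoc: "pr (pr x y) z = pr x (pr y z)"
  using malcev_poisson unfolding malcev_poisson_alg_def by blast

lemma br_pr_leibniz: "br x (pr y z) = pr (br x y) z + pr y (br x z)"
  using malcev_poisson unfolding malcev_poisson_alg_def by blast

lemma pr_left_commute: "pr (pr x y) z = pr y (pr x z)"
  by (metis pr_assoc pr_commute)

lemma br_pr_left: "br (pr x y) z = br x (pr y z) + br y (pr x z)"
proof -
  have "br x (pr y z) + br y (pr x z) = pr y (br x z) + pr x (br y z)"
    using br_antisym[of y x] by (simp add: br_pr_leibniz bilin_uminus_left[OF bilin_pr])
  also have "\<dots> = - br z (pr x y)"
    using br_antisym[of x z] br_antisym[of y z]
    by (simp add: br_pr_leibniz pr_commute bilin_uminus_left[OF bilin_pr] bilin_uminus_right[OF bilin_pr])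
  finally show ?thesis
    by (simp add: br_antisym[of z])
qed

lemma lin_br: "lin (br x)" and lin_pr: "lin (pr x)"
  and lin_br_left: "lin (\<lambda>y. br y x)" and lin_pr_left: "lin (\<lambda>y. pr y x)"
  using bilin_br bilin_pr by (simp_all add: bilin_def)

lemma pairing_coad_br: "pairing (coad br x \<xi>) y = - pairing \<xi> (br x y)"
  by (rule pairing_coad_left[OF lin_br])

lemma pairing_coad_pr: "pairing (coad pr x \<xi>) y = - pairing \<xi> (pr x y)"
  by (rule pairing_coad_left[OF lin_pr])

lemma pairing_br_right: "pairing \<eta> (br y u) = - pairing (coad br y \<eta>) u"
  by (simp add: pairing_coad_br)

lemma pairing_pr_right: "pairing \<eta> (pr y u) = - pairing (coad pr y \<eta>) u"
  by (simp add: pairing_coad_pr)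

lemma coad_br_malcev_rep: "malcev_rep br (coad br)"
  by (rule coad_malcev_rep[OF malcev])

lemma lin_coad_br: "lin (coad br x)" and lin_coad_pr: "lin (coad pr x)"
  using bilin_coad[OF bilin_br] bilin_coad[OF bilin_pr] by (simp_all add: bilin_def)

lemma coad_pr_pr: "coad pr (pr x y) v = - coad pr x (coad pr y v)"
  by (rule pairing_eqI) (simp add: pairing_coad_pr pr_left_commute)

lemma coad_pr_commute: "coad pr x (coad pr y v) = coad pr y (coad pr x v)"
  using coad_pr_pr[of x y v] coad_pr_pr[of y x v] pr_commute[of x y] by simp

lemma coad_br_pr: "coad br (pr x y) v = - coad pr y (coad br x v) - coad pr x (coad br y v)"
  by (rule pairing_eqI) (simp add: pairing_coad_pr pairing_coad_br br_pr_left)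

lemma coad_pr_br: "coad pr (br x y) v = coad br x (coad pr y v) - coad pr y (coad br x v)"
  by (rule pairing_eqI) (simp add: pairing_coad_pr pairing_coad_br br_pr_leibniz)

lemma coad_pr_assoc_rep: "assoc_rep pr (\<lambda>x \<xi>. - coad pr x \<xi>)"
  by (simp add: assoc_rep_def bilin_uminus[OF bilin_coad[OF bilin_pr]] coad_pr_pr lin_uminus[OF lin_coad_pr])

lemma coad_mp_rep: "mp_rep br pr (coad br) (\<lambda>x \<xi>. - coad pr x \<xi>)"
  by (simp add: mp_rep_def coad_br_malcev_rep coad_pr_assoc_rep coad_br_pr coad_pr_br
      lin_uminus[OF lin_coad_br])

end

section \<open>The coalgebra dual to a Malcev-Poisson algebra\<close>

lemma sum_pairing_lin:
  fixes x :: "'i::finite \<Rightarrow> 'k::field" and \<eta> :: "'j::finite \<Rightarrow> 'k"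
  assumes "lin f"
  shows "(\<Sum>b\<in>UNIV. pairing (f (bvec b)) x * \<eta> b) = pairing (f \<eta>) x"
  using pairing_transpose[OF assms, of x \<eta>]
  by (simp add: pairing_def mult.commute)

locale dual_mp_algebra = D: mp_algebra "dual_op delta" "dual_op Delta"
  for Delta delta :: "('n::finite \<Rightarrow> 'k::field_char_0) \<Rightarrow> ('n \<Rightarrow> 'n \<Rightarrow> 'k)" +
  assumes lin2_Delta: "lin2 Delta" and lin2_delta: "lin2 delta"
begin

abbreviation "prd \<equiv> dual_op Delta"
abbreviation "brd \<equiv> dual_op delta"

lemma Delta_coordinates: "Delta x i j = pairing (prd (bvec i) (bvec j)) x"
  by (rule comult_coordinates[OF lin2_Delta])

lemma delta_coordinates: "delta x i j = pairing (brd (bvec i) (bvec j)) x"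
  by (rule comult_coordinates[OF lin2_delta])

lemma Delta_cocommutative: "swap2 (Delta x) = Delta x"
  by (simp add: fun_eq_iff swap2_def Delta_coordinates D.pr_commute)

lemma delta_antisymmetric: "swap2 (delta x) = - delta x"
proof (intro ext)
  fix i j
  show "swap2 (delta x) i j = (- delta x) i j"
    using D.br_antisym[of "bvec j" "bvec i"] by (simp add: swap2_def delta_coordinates)
qed

lemma Delta_coassociative: "tens_id_F Delta (Delta x) = tens_F_id Delta (Delta x)"
proof (intro ext)
  fix i j k
  have "tens_id_F Delta (Delta x) i j k = pairing (prd (bvec i) (prd (bvec j) (bvec k))) x"
    by (simp add: tens_id_F_def Delta_coordinates sum_pairing_lin[OF D.lin_pr] flip: dual_op_bvec)
  moreover have "tens_F_id Delta (Delta x) i j k = pairing (prd (prd (bvec i) (bvec j)) (bvec k)) x"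
    by (simp add: tens_F_id_def Delta_coordinates sum_pairing_lin[OF D.lin_pr_left] flip: dual_op_bvec)
  ultimately show "tens_id_F Delta (Delta x) i j k = tens_F_id Delta (Delta x) i j k"
    by (simp add: D.pr_assoc)
qed

lemma Delta_delta_coleibniz:
  "tens_id_F Delta (delta x) - tens_F_id delta (Delta x) - tau_id (tens_id_F delta (Delta x)) = 0"
proof (intro ext)
  fix i j k
  have "tens_id_F Delta (delta x) i j k = pairing (brd (bvec i) (prd (bvec j) (bvec k))) x"
    by (simp add: tens_id_F_def Delta_coordinates delta_coordinates sum_pairing_lin[OF D.lin_br]
        flip: dual_op_bvec)
  moreover have "tens_F_id delta (Delta x) i j k = pairing (prd (brd (bvec i) (bvec j)) (bvec k)) x"
    by (simp add: tens_F_id_def Delta_coordinates delta_coordinates sum_pairing_lin[OF D.lin_pr_left]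
        flip: dual_op_bvec)
  moreover have "tau_id (tens_id_F delta (Delta x)) i j k = pairing (prd (bvec j) (brd (bvec i) (bvec k))) x"
    by (simp add: tens_id_F_def tau_id_def Delta_coordinates delta_coordinates
        sum_pairing_lin[OF D.lin_pr] flip: dual_op_bvec)
  ultimately show "(tens_id_F Delta (delta x) - tens_F_id delta (Delta x)
      - tau_id (tens_id_F delta (Delta x))) i j k = 0 i j k"
    by (simp add: D.br_pr_leibniz)
qed

lemma delta_comalcev:
  "let Q = tens_F_id_id delta (tens_F_id delta (delta x)) in
     id_tau_id (tens_F_G delta delta (delta x)) = Q + sigma4 Q + sigma4 (sigma4 Q) + sigma4 (sigma4 (sigma4 Q))"
proof -
  have Q: "tens_F_id_id delta (tens_F_id delta (delta x)) i j k l =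
      pairing (brd (brd (brd (bvec i) (bvec j)) (bvec k)) (bvec l)) x" for i j k l
  proof -
    have "tens_F_id delta (delta x) a k l = pairing (brd (brd (bvec a) (bvec k)) (bvec l)) x" for a
      by (simp add: tens_F_id_def delta_coordinates sum_pairing_lin[OF D.lin_br_left] flip: dual_op_bvec)
    then show ?thesis
      by (simp add: tens_F_id_id_def sum_pairing_lin[OF lin_comp[OF D.lin_br_left D.lin_br_left]]
          flip: dual_op_bvec)
  qed
  have L: "id_tau_id (tens_F_G delta delta (delta x)) i j k l =
      pairing (brd (brd (bvec i) (bvec k)) (brd (bvec j) (bvec l))) x" for i j k l
  proof -
    let ?U = "brd (bvec i) (bvec k)" and ?V = "brd (bvec j) (bvec l)"
    have "id_tau_id (tens_F_G delta delta (delta x)) i j k l =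
        (\<Sum>a\<in>UNIV. (\<Sum>b\<in>UNIV. pairing (brd (bvec a) (bvec b)) x * ?V b) * ?U a)"
      by (simp add: id_tau_id_def tens_F_G_def delta_coordinates sum_distrib_left sum_distrib_right mult_ac
          flip: dual_op_bvec)
    also have "\<dots> = pairing (brd ?U ?V) x"
      by (simp add: sum_pairing_lin[OF D.lin_br] sum_pairing_lin[OF D.lin_br_left])
    finally show ?thesis .
  qed
  show ?thesis
    by (simp add: fun_eq_iff sigma4_def Q L sagle_identity[OF D.malcev])
qed

theorem mp_coalg_Delta_delta: "mp_coalg Delta delta"
  unfolding mp_coalg_def
  using lin2_Delta lin2_delta Delta_cocommutative Delta_coassociative delta_antisymmetric delta_comalcev
    Delta_delta_coleibniz by blast

end

section \<open>The compatibility conditions\<close>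

locale mp_dual_pair = A: mp_algebra br pr + dual_mp_algebra Delta delta
  for br pr :: "('n::finite \<Rightarrow> 'k::field_char_0) \<Rightarrow> ('n \<Rightarrow> 'k) \<Rightarrow> ('n \<Rightarrow> 'k)"
    and Delta delta :: "('n \<Rightarrow> 'k) \<Rightarrow> ('n \<Rightarrow> 'n \<Rightarrow> 'k)"
begin

lemmas bilin_ops = A.bilin_pr A.bilin_br D.bilin_pr D.bilin_br
  bilin_coad[OF A.bilin_pr] bilin_coad[OF A.bilin_br] bilin_coad[OF D.bilin_pr] bilin_coad[OF D.bilin_br]

lemmas bilin_ops_uminus = bilin_ops[THEN bilin_uminus_left] bilin_ops[THEN bilin_uminus_right]

lemma pairing_coad_prd_right: "pairing w (coad prd \<xi> x) = - pairing (prd \<xi> w) x"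
  by (simp add: pairing_coad_right D.lin_pr pairing_commute[of x])

lemma pairing_coad_brd_right: "pairing w (coad brd \<xi> x) = - pairing (brd \<xi> w) x"
  by (simp add: pairing_coad_right D.lin_br pairing_commute[of x])

text \<open>A normal form for pairings: coadjoint actions are moved onto the arguments from A*.\<close>

lemma pairing_op_coad_dual:
  "pairing \<eta> (pr (coad prd \<xi> x) y) = pairing (prd \<xi> (coad pr y \<eta>)) x"
  "pairing \<eta> (pr y (coad prd \<xi> x)) = pairing (prd \<xi> (coad pr y \<eta>)) x"
  "pairing \<eta> (pr (coad brd \<xi> x) y) = pairing (brd \<xi> (coad pr y \<eta>)) x"
  "pairing \<eta> (pr y (coad brd \<xi> x)) = pairing (brd \<xi> (coad pr y \<eta>)) x"
  "pairing \<eta> (br y (coad prd \<xi> x)) = pairing (prd \<xi> (coad br y \<eta>)) x"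
  "pairing \<eta> (br y (coad brd \<xi> x)) = pairing (brd \<xi> (coad br y \<eta>)) x"
  "pairing \<eta> (br (coad prd \<xi> x) y) = - pairing (prd \<xi> (coad br y \<eta>)) x"
  "pairing \<eta> (br (coad brd \<xi> x) y) = - pairing (brd \<xi> (coad br y \<eta>)) x"
  by (simp_all only: A.pr_commute[of "coad _ \<xi> x" y] A.br_antisym[of "coad _ \<xi> x" y]
      pairing_uminus_right A.pairing_pr_right A.pairing_br_right pairing_coad_prd_right
      pairing_coad_brd_right minus_minus)

lemma dual_ops_coad_orient:
  "brd \<alpha> (coad \<theta> y \<beta>) = - brd (coad \<theta> y \<beta>) \<alpha>"
  "prd \<alpha> (coad \<theta> y \<beta>) = prd (coad \<theta> y \<beta>) \<alpha>"
  by (rule D.br_antisym, rule D.pr_commute)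

lemmas pairing_normalize = bilin_ops_uminus A.pairing_coad_pr A.pairing_coad_br
  pairing_coad_prd_right pairing_coad_brd_right pairing_op_coad_dual
  tpairing_tens2 tpairing_comult[OF lin2_Delta] tpairing_comult[OF lin2_delta] transpose_coad transpose_id

text \<open>Conditions (c) and (e) of a Malcev-Poisson bialgebra, paired with \<open>a \<otimes> b \<in> A* \<otimes> A*\<close>.\<close>

definition Delta_compat :: bool where
  "Delta_compat \<longleftrightarrow> (\<forall>x y a b.
     pairing (prd a b) (pr x y) + pairing (prd (coad pr x a) b) y + pairing (prd a (coad pr y b)) x = 0)"

definition delta_prod_compat :: bool where
  "delta_prod_compat \<longleftrightarrow> (\<forall>x y a b.
     pairing (brd a b) (pr x y) - pairing (prd (coad br y a) b) x - pairing (brd (coad pr x b) a) y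
     - pairing (prd (coad br x a) b) y - pairing (brd (coad pr y b) a) x = 0)"

definition Delta_bracket_compat :: bool where
  "Delta_bracket_compat \<longleftrightarrow> (\<forall>x y a b.
     pairing (prd a b) (br x y) + pairing (brd (coad pr y a) b) x + pairing (prd (coad br x b) a) y
     + pairing (brd (coad pr y b) a) x + pairing (prd (coad br x a) b) y = 0)"

lemma Delta_pr_iff:
  "(\<forall>x y. Delta (pr x y) = tens2 (pr x) id (Delta y) + tens2 id (pr y) (Delta x)) \<longleftrightarrow> Delta_compat"
  unfolding Delta_compat_def tensor_eq_iff_tpairing
  by (simp add: pairing_normalize algebra_simps eq_neg_iff_add_eq_0)

lemma delta_pr_iff:
  "(\<forall>x y. delta (pr x y) + tens2 (br y) id (Delta x) - tens2 id (pr x) (delta y)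
      + tens2 (br x) id (Delta y) - tens2 id (pr y) (delta x) = 0) \<longleftrightarrow> delta_prod_compat"
  unfolding delta_prod_compat_def tensor_eq_0_iff_tpairing
  by (simp add: pairing_normalize dual_ops_coad_orient algebra_simps eq_neg_iff_add_eq_0)

lemma Delta_br_iff:
  "(\<forall>x y. Delta (br x y) - tens2 (pr y) id (delta x) - tens2 id (br x) (Delta y)
      + tens2 id (pr y) (delta x) - tens2 (br x) id (Delta y) = 0) \<longleftrightarrow> Delta_bracket_compat"
  unfolding Delta_bracket_compat_def tensor_eq_0_iff_tpairing
  by (simp add: pairing_normalize dual_ops_coad_orient algebra_simps eq_neg_iff_add_eq_0)

lemma coad_pr_prd_iff:
  "(\<forall>x1 x2 y2. - coad pr x1 (prd x2 y2) = prd (- coad pr x1 x2) y2 + - coad pr (- coad prd x2 x1) y2)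
   \<longleftrightarrow> Delta_compat"
  unfolding Delta_compat_def vec_eq_iff_pairing
  by (simp add: pairing_normalize algebra_simps eq_neg_iff_add_eq_0) blast

lemma coad_prd_pr_iff:
  "(\<forall>x2 x1 y1. - coad prd x2 (pr x1 y1) = pr (- coad prd x2 x1) y1 + - coad prd (- coad pr x1 x2) y1)
   \<longleftrightarrow> Delta_compat"
  unfolding Delta_compat_def vec_eq_iff_pairing'
  by (simp add: pairing_normalize algebra_simps eq_neg_iff_add_eq_0) blast

lemma coad_brd_pr_iff:
  "(\<forall>x2 x1 y1. coad brd x2 (pr x1 y1) = pr (coad brd x2 x1) y1 + pr x1 (coad brd x2 y1)
      - - coad prd (coad br x1 x2) y1 - - coad prd (coad br y1 x2) x1) \<longleftrightarrow> delta_prod_compat"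
  unfolding delta_prod_compat_def vec_eq_iff_pairing'
  by (simp add: pairing_normalize dual_ops_coad_orient algebra_simps eq_neg_iff_add_eq_0) metis

lemma brd_coad_pr_iff:
  "(\<forall>x2 x1 y2. brd x2 (- coad pr x1 y2) - coad br (- coad prd y2 x1) x2
      = - coad pr (coad brd x2 x1) y2 - prd (coad br x1 x2) y2 + - coad pr x1 (brd x2 y2))
   \<longleftrightarrow> delta_prod_compat"
  unfolding delta_prod_compat_def vec_eq_iff_pairing
  by (simp add: pairing_normalize dual_ops_coad_orient algebra_simps eq_neg_iff_add_eq_0) metis

lemma coad_br_prd_iff:
  "(\<forall>x1 x2 y2. coad br x1 (prd x2 y2) = prd (coad br x1 x2) y2 + prd x2 (coad br x1 y2)
      - - coad pr (coad brd x2 x1) y2 - - coad pr (coad brd y2 x1) x2) \<longleftrightarrow> Delta_bracket_compat"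
  unfolding Delta_bracket_compat_def vec_eq_iff_pairing
  by (simp add: pairing_normalize dual_ops_coad_orient algebra_simps eq_neg_iff_add_eq_0 neg_eq_iff_add_eq_0)
    metis

lemma br_coad_prd_iff:
  "(\<forall>x1 x2 y1. br x1 (- coad prd x2 y1) - coad brd (- coad pr y1 x2) x1
      = - coad prd (coad br x1 x2) y1 - pr (coad brd x2 x1) y1 + - coad prd x2 (br x1 y1))
   \<longleftrightarrow> Delta_bracket_compat"
  unfolding Delta_bracket_compat_def vec_eq_iff_pairing'
  by (simp add: pairing_normalize dual_ops_coad_orient algebra_simps eq_neg_iff_add_eq_0 neg_eq_iff_add_eq_0)
    metis

abbreviation "double_br \<equiv> mp_bracket br brd (coad br) (coad brd)"

lemma mp_bialg_iff:
  "mp_bialg br pr Delta delta \<longleftrightarrow>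
     malcev_alg double_br \<and> Delta_compat \<and> delta_prod_compat \<and> Delta_bracket_compat"
  unfolding mp_bialg_def malcev_bialg_def Delta_pr_iff delta_pr_iff Delta_br_iff
  using A.malcev_poisson mp_coalg_Delta_delta A.coad_br_malcev_rep D.coad_br_malcev_rep by blast

lemma matched_pair_iff:
  "matched_pair br pr brd prd (coad br) (\<lambda>x \<xi>. - coad pr x \<xi>) (coad brd) (\<lambda>\<xi> x. - coad prd \<xi> x) \<longleftrightarrow>
     malcev_alg double_br \<and> Delta_compat \<and> delta_prod_compat \<and> Delta_bracket_compat"
  unfolding matched_pair_def coad_pr_prd_iff coad_prd_pr_iff coad_brd_pr_iff coad_br_prd_iff
    br_coad_prd_iff brd_coad_pr_iff
  using A.malcev_poisson D.malcev_poisson A.coad_br_malcev_rep D.coad_br_malcev_rep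
    A.coad_pr_assoc_rep D.coad_pr_assoc_rep A.coad_mp_rep D.coad_mp_rep by blast

end

section \<open>The double A \<oplus> A*\<close>

lemma projl_inl_v [simp]: "projl (inl_v x) = x"
  by (simp add: projl_def inl_v_def)

lemma projr_inl_v [simp]: "projr (inl_v x) = 0"
  by (simp add: projr_def inl_v_def fun_eq_iff)

lemma projl_inr_v [simp]: "projl (inr_v x) = 0"
  by (simp add: projl_def inr_v_def fun_eq_iff)

lemma projr_inr_v [simp]: "projr (inr_v x) = x"
  by (simp add: projr_def inr_v_def)

lemma projl_add [simp]: "projl (u + v) = projl u + projl v"
  and projr_add [simp]: "projr (u + v) = projr u + projr v"
  and projl_diff [simp]: "projl (u - v) = projl u - projl v"
  and projr_diff [simp]: "projr (u - v) = projr u - projr v"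
  and projl_uminus [simp]: "projl (- u) = - projl u"
  and projr_uminus [simp]: "projr (- u) = - projr u"
  and projl_zero [simp]: "projl 0 = 0"
  and projr_zero [simp]: "projr 0 = 0"
  and projl_smult [simp]: "projl (smult_v c u) = smult_v c (projl u)"
  and projr_smult [simp]: "projr (smult_v c u) = smult_v c (projr u)"
  by (simp_all add: projl_def projr_def smult_v_def fun_eq_iff)

lemma sum_vec_eq_iff: "u = v \<longleftrightarrow> projl u = projl v \<and> projr u = projr v"
  by (auto simp: projl_def projr_def fun_eq_iff) (metis sum.exhaust)

lemma sum_vec_decompose: "u = inl_v (projl u) + inr_v (projr (u :: 'i + 'j \<Rightarrow> 'k::field))"
  by (simp add: sum_vec_eq_iff)

lemma smult_v_zero [simp]: "smult_v c 0 = 0"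
  by (simp add: smult_v_def fun_eq_iff)

lemma inl_v_zero [simp]: "inl_v 0 = (0 :: 'i + 'j \<Rightarrow> 'k::field)"
  and inr_v_zero [simp]: "inr_v 0 = (0 :: 'i + 'j \<Rightarrow> 'k::field)"
  by (simp_all add: sum_vec_eq_iff)

lemma inl_v_add: "inl_v (x + y) = inl_v x + inl_v (y :: 'i \<Rightarrow> 'k::field)"
  and inr_v_add: "inr_v (x + y) = inr_v x + inr_v (y :: 'i \<Rightarrow> 'k::field)"
  and inl_v_smult: "inl_v (smult_v c x) = smult_v c (inl_v (x :: 'i \<Rightarrow> 'k::field))"
  and inr_v_smult: "inr_v (smult_v c x) = smult_v c (inr_v (x :: 'i \<Rightarrow> 'k::field))"
  by (simp_all add: sum_vec_eq_iff)

lemma omega_d_inl_right: "omega_d u (inl_v y) = pairing (projr u) y"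
  and omega_d_inr_right: "omega_d u (inr_v y) = pairing (projl u) y"
  by (simp_all add: omega_d_def)

lemma smult_v_add: "smult_v c (a + b) = smult_v c a + smult_v c b"
  and smult_v_diff: "smult_v c (a - b) = smult_v c a - smult_v c b"
  by (simp_all add: smult_v_def fun_eq_iff algebra_simps)

lemma smult_v_one [simp]: "smult_v 1 a = a"
  and smult_v_minus_one [simp]: "smult_v (- 1) a = - a"
  by (simp_all add: smult_v_def fun_eq_iff)

lemma omega_d_smult_left: "omega_d (smult_v c u) w = c * omega_d u w"
  by (simp add: omega_d_def distrib_left)

definition mp_product ::
  "(('i \<Rightarrow> 'k::field) \<Rightarrow> ('i \<Rightarrow> 'k) \<Rightarrow> ('i \<Rightarrow> 'k)) \<Rightarrow> (('j \<Rightarrow> 'k) \<Rightarrow> ('j \<Rightarrow> 'k) \<Rightarrow> ('j \<Rightarrow> 'k))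
   \<Rightarrow> (('i \<Rightarrow> 'k) \<Rightarrow> ('j \<Rightarrow> 'k) \<Rightarrow> ('j \<Rightarrow> 'k)) \<Rightarrow> (('j \<Rightarrow> 'k) \<Rightarrow> ('i \<Rightarrow> 'k) \<Rightarrow> ('i \<Rightarrow> 'k))
   \<Rightarrow> ('i + 'j \<Rightarrow> 'k) \<Rightarrow> ('i + 'j \<Rightarrow> 'k) \<Rightarrow> ('i + 'j \<Rightarrow> 'k)" where
  "mp_product pr1 pr2 mu1 mu2 u v =
     inl_v (pr1 (projl u) (projl v) + mu2 (projr u) (projl v) + mu2 (projr v) (projl u))
   + inr_v (pr2 (projr u) (projr v) + mu1 (projl u) (projr v) + mu1 (projl v) (projr u))"

lemma bilin_mp_bracket:
  assumes "bilin br1" "bilin br2" "bilin rho1" "bilin rho2"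
  shows "bilin (mp_bracket br1 br2 rho1 rho2)"
  unfolding bilin_def lin_def
  by (auto simp: sum_vec_eq_iff mp_bracket_def assms[THEN bilin_add_left] assms[THEN bilin_add_right]
      assms[THEN bilin_smult_left] assms[THEN bilin_smult_right] smult_v_add smult_v_diff
      inl_v_smult inr_v_smult algebra_simps)

lemma bilin_mp_product:
  assumes "bilin pr1" "bilin pr2" "bilin mu1" "bilin mu2"
  shows "bilin (mp_product pr1 pr2 mu1 mu2)"
  unfolding bilin_def lin_def
  by (auto simp: sum_vec_eq_iff mp_product_def assms[THEN bilin_add_left] assms[THEN bilin_add_right]
      assms[THEN bilin_smult_left] assms[THEN bilin_smult_right] smult_v_add
      inl_v_smult inr_v_smult algebra_simps)

lemma bilin_eq_on_summands:
  fixes m m' :: "('i + 'j \<Rightarrow> 'k::field) \<Rightarrow> ('i + 'j \<Rightarrow> 'k) \<Rightarrow> ('i + 'j \<Rightarrow> 'k)"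
  assumes "bilin m" "bilin m'"
    and "\<And>x y. m (inl_v x) (inl_v y) = m' (inl_v x) (inl_v y)"
    and "\<And>x \<eta>. m (inl_v x) (inr_v \<eta>) = m' (inl_v x) (inr_v \<eta>)"
    and "\<And>\<xi> y. m (inr_v \<xi>) (inl_v y) = m' (inr_v \<xi>) (inl_v y)"
    and "\<And>\<xi> \<eta>. m (inr_v \<xi>) (inr_v \<eta>) = m' (inr_v \<xi>) (inr_v \<eta>)"
  shows "m = m'"
proof -
  have "m u v = m' u v" for u v
  proof -
    have "m u v = m (inl_v (projl u) + inr_v (projr u)) (inl_v (projl v) + inr_v (projr v))"
      by (simp flip: sum_vec_decompose)
    also have "\<dots> = m' (inl_v (projl u) + inr_v (projr u)) (inl_v (projl v) + inr_v (projr v))"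
      by (simp add: assms bilin_add_left[OF assms(1)] bilin_add_right[OF assms(1)]
          bilin_add_left[OF assms(2)] bilin_add_right[OF assms(2)])
    finally show ?thesis
      by (simp flip: sum_vec_decompose)
  qed
  then show ?thesis
    by (intro ext) simp
qed

lemma trilinear_eq_on_summands:
  fixes F G :: "('i + 'j \<Rightarrow> 'k::field) \<Rightarrow> ('i + 'j \<Rightarrow> 'k) \<Rightarrow> ('i + 'j \<Rightarrow> 'k) \<Rightarrow> 'a::comm_monoid_add"
  assumes "\<And>u u' v w. F (u + u') v w = F u v w + F u' v w"
    and "\<And>u v v' w. F u (v + v') w = F u v w + F u v' w"
    and "\<And>u v w w'. F u v (w + w') = F u v w + F u v w'"
    and "\<And>u u' v w. G (u + u') v w = G u v w + G u' v w"
    and "\<And>u v v' w. G u (v + v') w = G u v w + G u v' w"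
    and "\<And>u v w w'. G u v (w + w') = G u v w + G u v w'"
    and on_summands: "\<And>u v w. u \<in> range inl_v \<union> range inr_v \<Longrightarrow> v \<in> range inl_v \<union> range inr_v
      \<Longrightarrow> w \<in> range inl_v \<union> range inr_v \<Longrightarrow> F u v w = G u v w"
  shows "F u v w = G u v w"
proof -
  let ?d = "\<lambda>u :: 'i + 'j \<Rightarrow> 'k. inl_v (projl u) + inr_v (projr u)"
  have "F u v w = F (?d u) (?d v) (?d w)"
    by (simp flip: sum_vec_decompose)
  also have "\<dots> = G (?d u) (?d v) (?d w)"
    by (simp only: assms(1-6) on_summands rangeI UnI1 UnI2)
  also have "\<dots> = G u v w"
    by (simp flip: sum_vec_decompose)
  finally show ?thesis .
qed

lemma invariant_op_unique:
  fixes m m' :: "('n::finite + 'n \<Rightarrow> 'k::field) \<Rightarrow> ('n + 'n \<Rightarrow> 'k) \<Rightarrow> ('n + 'n \<Rightarrow> 'k)"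
  assumes bilin: "bilin m" "bilin m'" and "c \<noteq> 0"
    and swap: "\<And>u v. m v u = smult_v c (m u v)" "\<And>u v. m' v u = smult_v c (m' u v)"
    and inv: "\<And>u v w. omega_d (m u v) w = omega_d u (m v w)"
      "\<And>u v w. omega_d (m' u v) w = omega_d u (m' v w)"
    and on_A: "\<And>x y. m (inl_v x) (inl_v y) = m' (inl_v x) (inl_v y)"
    and on_dual: "\<And>\<xi> \<eta>. m (inr_v \<xi>) (inr_v \<eta>) = m' (inr_v \<xi>) (inr_v \<eta>)"
  shows "m = m'"
proof -
  have transpose_mixed:
    "c * pairing (projr (f (inl_v x) (inr_v \<eta>))) y = omega_d (inr_v \<eta>) (f (inl_v x) (inl_v y))"
    if "\<And>u v. f v u = smult_v c (f u v)" "\<And>u v w. omega_d (f u v) w = omega_d u (f v w)"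
    for f :: "('n + 'n \<Rightarrow> 'k) \<Rightarrow> ('n + 'n \<Rightarrow> 'k) \<Rightarrow> ('n + 'n \<Rightarrow> 'k)" and x \<eta> y
    using that(2)[of "inr_v \<eta>" "inl_v x" "inl_v y"]
    by (simp add: omega_d_inl_right omega_d_smult_left that(1)[of "inr_v \<eta>" "inl_v x"])
  have mixed: "m (inl_v x) (inr_v \<eta>) = m' (inl_v x) (inr_v \<eta>)" for x \<eta>
  proof -
    have "pairing (projl (m (inl_v x) (inr_v \<eta>))) z = pairing (projl (m' (inl_v x) (inr_v \<eta>))) z" for z
      using inv[of "inl_v x" "inr_v \<eta>" "inr_v z"] on_dual[of \<eta> z]
      by (simp add: omega_d_inr_right)
    moreover have "pairing (projr (m (inl_v x) (inr_v \<eta>))) y = pairing (projr (m' (inl_v x) (inr_v \<eta>))) y"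
      for y
      using transpose_mixed[OF swap(1) inv(1), of x \<eta> y] transpose_mixed[OF swap(2) inv(2), of x \<eta> y]
        on_A[of x y] \<open>c \<noteq> 0\<close> by (metis mult_left_cancel)
    ultimately show ?thesis
      by (simp add: sum_vec_eq_iff vec_eq_iff_pairing)
  qed
  moreover have "m (inr_v \<xi>) (inl_v y) = m' (inr_v \<xi>) (inl_v y)" for \<xi> y
    using swap(1)[of "inr_v \<xi>" "inl_v y"] swap(2)[of "inr_v \<xi>" "inl_v y"] mixed[of y \<xi>] by simp
  ultimately show ?thesis
    by (rule bilin_eq_on_summands[OF bilin on_A _ _ on_dual])
qed

context mp_dual_pair
begin

abbreviation "double_pr \<equiv> mp_product pr prd (\<lambda>x \<xi>. - coad pr x \<xi>) (\<lambda>\<xi> x. - coad prd \<xi> x)"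

lemma bilin_double_br: "bilin double_br"
  by (intro bilin_mp_bracket bilin_ops)

lemma bilin_double_pr: "bilin double_pr"
  by (intro bilin_mp_product bilin_ops bilin_uminus)

lemmas bilin_ops_simps = bilin_ops[THEN bilin_add_left] bilin_ops[THEN bilin_add_right]
  bilin_ops[THEN bilin_diff_left] bilin_ops[THEN bilin_diff_right]
  bilin_ops[THEN bilin_zero_left] bilin_ops[THEN bilin_zero_right] bilin_ops_uminus

lemma double_pr_summands:
  "double_pr (inl_v x) (inl_v y) = inl_v (pr x y)"
  "double_pr (inl_v x) (inr_v \<eta>) = inl_v (- coad prd \<eta> x) + inr_v (- coad pr x \<eta>)"
  "double_pr (inr_v \<xi>) (inl_v y) = inl_v (- coad prd \<xi> y) + inr_v (- coad pr y \<xi>)"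
  "double_pr (inr_v \<xi>) (inr_v \<eta>) = inr_v (prd \<xi> \<eta>)"
  by (simp_all add: mp_product_def bilin_ops_simps)

lemma double_br_summands:
  "double_br (inl_v x) (inl_v y) = inl_v (br x y)"
  "double_br (inl_v x) (inr_v \<eta>) = inl_v (- coad brd \<eta> x) + inr_v (coad br x \<eta>)"
  "double_br (inr_v \<xi>) (inl_v y) = inl_v (coad brd \<xi> y) + inr_v (- coad br y \<xi>)"
  "double_br (inr_v \<xi>) (inr_v \<eta>) = inr_v (brd \<xi> \<eta>)"
  by (simp_all add: mp_bracket_def bilin_ops_simps)

lemma double_pr_commute: "double_pr u v = double_pr v u"
  by (simp add: sum_vec_eq_iff mp_product_def A.pr_commute D.pr_commute algebra_simps)

lemma double_br_antisym: "double_br u v = - double_br v u"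
  by (simp add: sum_vec_eq_iff mp_bracket_def A.br_antisym[of "projl v"] D.br_antisym[of "projr v"])

lemma double_pr_invariant: "omega_d (double_pr u v) w = omega_d u (double_pr v w)"
  by (simp add: omega_d_def mp_product_def pairing_coad_left pairing_coad_right A.lin_pr D.lin_pr
      pairing_commute A.pr_commute D.pr_commute algebra_simps)

lemma double_br_invariant: "omega_d (double_br u v) w = omega_d u (double_br v w)"
  by (simp add: omega_d_def mp_bracket_def pairing_coad_left pairing_coad_right A.lin_br D.lin_br
      pairing_commute algebra_simps A.br_antisym[of "projl v" "projl u"] A.br_antisym[of "projl w" "projl u"]
      D.br_antisym[of "projr w" "projr u"] D.br_antisym[of "projr v" "projr u"])

lemma std_manin_triple_iff: "std_manin_triple br pr brd prd \<longleftrightarrow> malcev_poisson_alg double_br double_pr"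
proof
  assume "std_manin_triple br pr brd prd"
  then obtain brS prS where mp: "malcev_poisson_alg brS prS"
    and on_A: "\<And>x y. brS (inl_v x) (inl_v y) = inl_v (br x y)
      \<and> prS (inl_v x) (inl_v y) = inl_v (pr x y)"
    and on_dual: "\<And>\<xi> \<eta>. brS (inr_v \<xi>) (inr_v \<eta>) = inr_v (brd \<xi> \<eta>)
      \<and> prS (inr_v \<xi>) (inr_v \<eta>) = inr_v (prd \<xi> \<eta>)"
    and inv_pr: "\<And>u v w. omega_d (prS u v) w = omega_d u (prS v w)"
    and inv_br: "\<And>u v w. omega_d (brS u v) w = omega_d u (brS v w)"
    unfolding std_manin_triple_def by blast
  interpret S: mp_algebra brS prS
    by unfold_locales (rule mp)
  have pr_swap: "prS v u = smult_v 1 (prS u v)" "double_pr v u = smult_v 1 (double_pr u v)" for u v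
    by (simp_all add: S.pr_commute double_pr_commute)
  have br_swap: "brS v u = smult_v (- 1) (brS u v)"
    "double_br v u = smult_v (- 1) (double_br u v)" for u v
    using S.br_antisym[of v u] double_br_antisym[of v u] by simp_all
  have "prS = double_pr"
    by (rule invariant_op_unique[OF S.bilin_pr bilin_double_pr one_neq_zero pr_swap inv_pr
          double_pr_invariant]) (simp_all add: on_A on_dual double_pr_summands)
  moreover have "brS = double_br"
    by (rule invariant_op_unique[OF S.bilin_br bilin_double_br neg_one_neq_zero br_swap inv_br
          double_br_invariant]) (simp_all add: on_A on_dual double_br_summands)
  ultimately show "malcev_poisson_alg double_br double_pr"
    using mp by simp
next
  assume "malcev_poisson_alg double_br double_pr"
  then show "std_manin_triple br pr brd prd"
    unfolding std_manin_triple_def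
    by (intro exI[of _ double_br] exI[of _ double_pr])
      (simp add: double_pr_summands double_br_summands double_pr_invariant double_br_invariant)
qed

lemmas double_summand_simps = sum_vec_eq_iff double_pr_summands double_br_summands bilin_ops_simps
  bilin_double_pr[THEN bilin_add_left] bilin_double_pr[THEN bilin_add_right]
  bilin_double_br[THEN bilin_add_left] bilin_double_br[THEN bilin_add_right]
  A.coad_pr_pr D.coad_pr_pr A.coad_br_pr D.coad_br_pr A.coad_pr_br D.coad_pr_br
  A.coad_pr_commute D.coad_pr_commute A.pr_commute D.pr_commute

text \<open>In the names of the block lemmas, l and r mark arguments from A and from A* respectively.\<close>

lemma double_assoc_llr_iff:
  "(\<forall>x y \<xi>. double_pr (double_pr (inl_v x) (inl_v y)) (inr_v \<xi>) = double_pr (inl_v x) (double_pr (inl_v y) (inr_v \<xi>)))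
   \<longleftrightarrow> Delta_compat"
  unfolding coad_prd_pr_iff[symmetric] by (simp add: double_summand_simps algebra_simps) (metis A.pr_commute D.pr_commute)

lemma double_assoc_rll_iff:
  "(\<forall>\<xi> x y. double_pr (double_pr (inr_v \<xi>) (inl_v x)) (inl_v y) = double_pr (inr_v \<xi>) (double_pr (inl_v x) (inl_v y)))
   \<longleftrightarrow> Delta_compat"
  unfolding coad_prd_pr_iff[symmetric] by (simp add: double_summand_simps algebra_simps) (metis A.pr_commute D.pr_commute)

lemma double_assoc_lrr_iff:
  "(\<forall>x \<xi> \<eta>. double_pr (double_pr (inl_v x) (inr_v \<xi>)) (inr_v \<eta>) = double_pr (inl_v x) (double_pr (inr_v \<xi>) (inr_v \<eta>)))
   \<longleftrightarrow> Delta_compat"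
  unfolding coad_pr_prd_iff[symmetric] by (simp add: double_summand_simps algebra_simps) (metis A.pr_commute D.pr_commute)

lemma double_assoc_rrl_iff:
  "(\<forall>\<xi> \<eta> x. double_pr (double_pr (inr_v \<xi>) (inr_v \<eta>)) (inl_v x) = double_pr (inr_v \<xi>) (double_pr (inr_v \<eta>) (inl_v x)))
   \<longleftrightarrow> Delta_compat"
  unfolding coad_pr_prd_iff[symmetric] by (simp add: double_summand_simps algebra_simps) (metis A.pr_commute D.pr_commute)

lemma double_pr_assoc_iff:
  "(\<forall>u v w. double_pr (double_pr u v) w = double_pr u (double_pr v w)) \<longleftrightarrow> Delta_compat"
proof
  assume "\<forall>u v w. double_pr (double_pr u v) w = double_pr u (double_pr v w)"
  then show Delta_compat
    using double_assoc_llr_iff by blast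
next
  let ?P = double_pr
  assume Delta_compat
  then have llr: "?P (?P (inl_v x) (inl_v y)) (inr_v \<xi>) = ?P (inl_v x) (?P (inl_v y) (inr_v \<xi>))"
    and rll: "?P (?P (inr_v \<xi>) (inl_v x)) (inl_v y) = ?P (inr_v \<xi>) (?P (inl_v x) (inl_v y))"
    and lrr: "?P (?P (inl_v x) (inr_v \<xi>)) (inr_v \<eta>) = ?P (inl_v x) (?P (inr_v \<xi>) (inr_v \<eta>))"
    and rrl: "?P (?P (inr_v \<xi>) (inr_v \<eta>)) (inl_v x) = ?P (inr_v \<xi>) (?P (inr_v \<eta>) (inl_v x))"
    for x y \<xi> \<eta>
    using double_assoc_llr_iff double_assoc_rll_iff double_assoc_lrr_iff double_assoc_rrl_iff by blast+
  have lrl: "?P (?P (inl_v x) (inr_v \<xi>)) (inl_v y) = ?P (inl_v x) (?P (inr_v \<xi>) (inl_v y))" for x y \<xi>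
    by (metis rll llr double_pr_commute)
  have rlr: "?P (?P (inr_v \<xi>) (inl_v x)) (inr_v \<eta>) = ?P (inr_v \<xi>) (?P (inl_v x) (inr_v \<eta>))" for x \<xi> \<eta>
    by (metis lrr rrl double_pr_commute)
  have lll: "?P (?P (inl_v x) (inl_v y)) (inl_v z) = ?P (inl_v x) (?P (inl_v y) (inl_v z))" for x y z
    by (simp add: double_pr_summands A.pr_assoc)
  have rrr: "?P (?P (inr_v \<xi>) (inr_v \<eta>)) (inr_v \<zeta>) = ?P (inr_v \<xi>) (?P (inr_v \<eta>) (inr_v \<zeta>))" for \<xi> \<eta> \<zeta>
    by (simp add: double_pr_summands D.pr_assoc)
  have "?P (?P u v) w = ?P u (?P v w)" for u v w
  proof (rule trilinear_eq_on_summands[where F = "\<lambda>u v w. ?P (?P u v) w" and G = "\<lambda>u v w. ?P u (?P v w)"])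
    fix u v w :: "'n + 'n \<Rightarrow> 'k"
    assume "u \<in> range inl_v \<union> range inr_v" "v \<in> range inl_v \<union> range inr_v" "w \<in> range inl_v \<union> range inr_v"
    then show "?P (?P u v) w = ?P u (?P v w)"
      by (elim UnE rangeE) (simp_all only: lll llr lrl lrr rll rlr rrl rrr)
  qed (simp_all add: bilin_double_pr[THEN bilin_add_left] bilin_double_pr[THEN bilin_add_right])
  then show "\<forall>u v w. ?P (?P u v) w = ?P u (?P v w)"
    by blast
qed

lemma double_leibniz_llr_iff:
  "(\<forall>x \<xi> y. double_br (inl_v x) (double_pr (inl_v y) (inr_v \<xi>)) =
      double_pr (double_br (inl_v x) (inl_v y)) (inr_v \<xi>) + double_pr (inl_v y) (double_br (inl_v x) (inr_v \<xi>)))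
   \<longleftrightarrow> Delta_bracket_compat"
  unfolding br_coad_prd_iff[symmetric] by (simp add: double_summand_simps algebra_simps)

lemma double_leibniz_lrr_iff:
  "(\<forall>x \<xi> \<eta>. double_br (inl_v x) (double_pr (inr_v \<xi>) (inr_v \<eta>)) =
      double_pr (double_br (inl_v x) (inr_v \<xi>)) (inr_v \<eta>) + double_pr (inr_v \<xi>) (double_br (inl_v x) (inr_v \<eta>)))
   \<longleftrightarrow> Delta_bracket_compat"
  unfolding coad_br_prd_iff[symmetric] by (simp add: double_summand_simps algebra_simps)

lemma double_leibniz_rll_iff:
  "(\<forall>\<xi> x y. double_br (inr_v \<xi>) (double_pr (inl_v x) (inl_v y)) =
      double_pr (double_br (inr_v \<xi>) (inl_v x)) (inl_v y) + double_pr (inl_v x) (double_br (inr_v \<xi>) (inl_v y)))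
   \<longleftrightarrow> delta_prod_compat"
  unfolding coad_brd_pr_iff[symmetric] by (simp add: double_summand_simps algebra_simps)

lemma double_leibniz_rlr_iff:
  "(\<forall>\<xi> x \<eta>. double_br (inr_v \<xi>) (double_pr (inl_v x) (inr_v \<eta>)) =
      double_pr (double_br (inr_v \<xi>) (inl_v x)) (inr_v \<eta>) + double_pr (inl_v x) (double_br (inr_v \<xi>) (inr_v \<eta>)))
   \<longleftrightarrow> delta_prod_compat"
  unfolding brd_coad_pr_iff[symmetric] by (simp add: double_summand_simps algebra_simps)

lemma double_leibniz_iff:
  "(\<forall>u v w. double_br u (double_pr v w) = double_pr (double_br u v) w + double_pr v (double_br u w))
   \<longleftrightarrow> delta_prod_compat \<and> Delta_bracket_compat"
proof
  assume "\<forall>u v w. double_br u (double_pr v w) = double_pr (double_br u v) w + double_pr v (double_br u w)"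
  then show "delta_prod_compat \<and> Delta_bracket_compat"
    using double_leibniz_rll_iff double_leibniz_llr_iff by blast
next
  let ?P = double_pr and ?B = double_br
  let ?L = "\<lambda>u v w. ?B u (?P v w)" and ?R = "\<lambda>u v w. ?P (?B u v) w + ?P v (?B u w)"
  assume "delta_prod_compat \<and> Delta_bracket_compat"
  then have llr: "?L (inl_v x) (inl_v y) (inr_v \<xi>) = ?R (inl_v x) (inl_v y) (inr_v \<xi>)"
    and lrr: "?L (inl_v x) (inr_v \<xi>) (inr_v \<eta>) = ?R (inl_v x) (inr_v \<xi>) (inr_v \<eta>)"
    and rll: "?L (inr_v \<xi>) (inl_v x) (inl_v y) = ?R (inr_v \<xi>) (inl_v x) (inl_v y)"
    and rlr: "?L (inr_v \<xi>) (inl_v x) (inr_v \<eta>) = ?R (inr_v \<xi>) (inl_v x) (inr_v \<eta>)"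
    for x y \<xi> \<eta>
    using double_leibniz_llr_iff double_leibniz_lrr_iff double_leibniz_rll_iff double_leibniz_rlr_iff
    by blast+
  have lrl: "?L (inl_v x) (inr_v \<xi>) (inl_v y) = ?R (inl_v x) (inr_v \<xi>) (inl_v y)" for x y \<xi>
    using llr[of x y \<xi>] by (simp add: double_pr_commute add.commute)
  have rrl: "?L (inr_v \<xi>) (inr_v \<eta>) (inl_v x) = ?R (inr_v \<xi>) (inr_v \<eta>) (inl_v x)" for x \<xi> \<eta>
    using rlr[of \<xi> x \<eta>] by (simp add: double_pr_commute add.commute)
  have lll: "?L (inl_v x) (inl_v y) (inl_v z) = ?R (inl_v x) (inl_v y) (inl_v z)" for x y z
    by (simp add: double_pr_summands double_br_summands A.br_pr_leibniz inl_v_add)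
  have rrr: "?L (inr_v \<xi>) (inr_v \<eta>) (inr_v \<zeta>) = ?R (inr_v \<xi>) (inr_v \<eta>) (inr_v \<zeta>)" for \<xi> \<eta> \<zeta>
    by (simp add: double_pr_summands double_br_summands D.br_pr_leibniz inr_v_add)
  have "?L u v w = ?R u v w" for u v w
  proof (rule trilinear_eq_on_summands[where F = ?L and G = ?R])
    fix u v w :: "'n + 'n \<Rightarrow> 'k"
    assume "u \<in> range inl_v \<union> range inr_v" "v \<in> range inl_v \<union> range inr_v" "w \<in> range inl_v \<union> range inr_v"
    then show "?L u v w = ?R u v w"
      by (elim UnE rangeE) (simp_all only: lll llr lrl lrr rll rlr rrl rrr)
  qed (simp_all add: bilin_double_pr[THEN bilin_add_left] bilin_double_pr[THEN bilin_add_right]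
      bilin_double_br[THEN bilin_add_left] bilin_double_br[THEN bilin_add_right] algebra_simps)
  then show "\<forall>u v w. ?B u (?P v w) = ?P (?B u v) w + ?P v (?B u w)"
    by blast
qed

lemma malcev_poisson_double_iff:
  "malcev_poisson_alg double_br double_pr \<longleftrightarrow>
     malcev_alg double_br \<and> Delta_compat \<and> delta_prod_compat \<and> Delta_bracket_compat"
  unfolding malcev_poisson_alg_def double_pr_assoc_iff[symmetric] double_leibniz_iff[symmetric]
  using bilin_double_pr double_pr_commute by blast

end

theorem mainTheorem4:
  fixes br pr :: "('n::finite \<Rightarrow> 'k::{alg_closed_field, field_char_0}) \<Rightarrow> ('n \<Rightarrow> 'k) \<Rightarrow> ('n \<Rightarrow> 'k)"
    and Delta delta :: "('n \<Rightarrow> 'k) \<Rightarrow> ('n \<Rightarrow> 'n \<Rightarrow> 'k)"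
  assumes "malcev_poisson_alg br pr"
    and "lin2 Delta" and "lin2 delta"
    and "malcev_poisson_alg (dual_op delta) (dual_op Delta)"
  shows "(mp_bialg br pr Delta delta \<longleftrightarrow>
           matched_pair br pr (dual_op delta) (dual_op Delta)
             (coad br) (\<lambda>x xi. - coad pr x xi)
             (coad (dual_op delta)) (\<lambda>xi x. - coad (dual_op Delta) xi x))
       \<and> (mp_bialg br pr Delta delta \<longleftrightarrow>
           std_manin_triple br pr (dual_op delta) (dual_op Delta))"
proof -
  interpret mp_dual_pair br pr Delta delta
    by unfold_locales (use assms in simp_all)
  show ?thesis
    by (simp add: mp_bialg_iff matched_pair_iff std_manin_triple_iff malcev_poisson_double_iff)
qed

end
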